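(* Let $(X,\beta,m)$ be a non-atomic standard probability space and $\tau$ an ergodic invertible measure-preserving map of $X$. Let $L\ge1$ and $0<\gamma_L<\dots<\gamma_1<1$, and let $\eta>0$. Then there are measurable sets $U_1\supset U_2\supset\dots\supset U_L$ with $m(U_l)=\gamma_l$ for $1\le l\le L$ such that for every choice $e_l\in\{1,c\}$, $1\le l\le L$, $$\Big|\,m\Big(\bigcap_{l=1}^L\tau^{l-1}\big(U_l^{e_l}\big)\Big)-\prod_{l=1}^L m\big(U_l^{e_l}\big)\Big|\le\eta.$$
   Context: For a set $U$, $U^1=U$ and $U^c=X\setminus U$. *)

theory Defs
  imports "HOL-Probability.Probability"
begin

text \<open>A standard probability space: a probability measure on the Borel sigma-algebra
of a Polish space (every standard Borel space is isomorphic to such a space).\<close>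
definition standard_prob_space :: "'a::polish_space measure \<Rightarrow> bool" where
  "standard_prob_space M \<longleftrightarrow> prob_space M \<and> sets M = sets borel"

definition non_atomic :: "'a measure \<Rightarrow> bool" where
  "non_atomic M \<longleftrightarrow> (\<forall>A\<in>sets M. measure M A > 0 \<longrightarrow>
      (\<exists>B\<in>sets M. B \<subseteq> A \<and> 0 < measure M B \<and> measure M B < measure M A))"

definition measure_preserving_map :: "'a measure \<Rightarrow> ('a \<Rightarrow> 'a) \<Rightarrow> bool" where
  "measure_preserving_map M T \<longleftrightarrow> T \<in> measurable M M \<and> distr M M T = M"

definition invertible_mp_map :: "'a measure \<Rightarrow> ('a \<Rightarrow> 'a) \<Rightarrow> bool" where
  "invertible_mp_map M T \<longleftrightarrow> measure_preserving_map M T \<and>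
      bij_betw T (space M) (space M) \<and> the_inv_into (space M) T \<in> measurable M M"

definition ergodic_map :: "'a measure \<Rightarrow> ('a \<Rightarrow> 'a) \<Rightarrow> bool" where
  "ergodic_map M T \<longleftrightarrow> (\<forall>A\<in>sets M. T -` A \<inter> space M = A \<longrightarrow>
      measure M A = 0 \<or> measure M A = 1)"

text \<open>U^e with e = True meaning U^1 = U and e = False meaning U^c = X - U.\<close>
definition set_power :: "'a measure \<Rightarrow> 'a set \<Rightarrow> bool \<Rightarrow> 'a set" where
  "set_power M U e = (if e then U else space M - U)"

end

theory Submission
  imports Defs
begin

text \<open>Write \<open>\<sigma>\<close> for the inverse of \<open>\<tau>\<close>, so that \<open>\<tau>\<^sup>l\<^sup>-\<^sup>1(U) = (\<sigma>\<^sup>l\<^sup>-\<^sup>1)\<^sup>-\<^sup>1(U)\<close>.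
  Ergodicity on a non-atomic space makes \<open>\<tau>\<close> aperiodic, so there is a finite measurable partition
  with small cells along which the orbit segment \<open>x, \<sigma> x, \<dots>, \<sigma>\<^sup>L\<^sup>-\<^sup>1 x\<close> rarely visits a cell twice.
  Give every cell an independent random level \<open>v \<in> {0..L}\<close> with probability \<open>\<gamma>\<^sub>v - \<gamma>\<^sub>v\<^sub>+\<^sub>1\<close>
  (where \<open>\<gamma>\<^sub>0 = 1\<close>, \<open>\<gamma>\<^sub>L\<^sub>+\<^sub>1 = 0\<close>) and let \<open>U\<^sub>l\<close> be the union of the cells of level at least \<open>l\<close>.
  Levels of distinct cells are independent, so a second moment computation bounds the expected squared
  deviation of every \<open>m(\<Inter>\<^sub>l \<tau>\<^sup>l\<^sup>-\<^sup>1 U\<^sub>l\<^sup>e\<^sup>l)\<close> from \<open>\<Prod>\<^sub>l m(U\<^sub>l\<^sup>e\<^sup>l)\<close>, and some labelling makes all of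
  these deviations small at once. Finally, non-atomicity lets one move the nested sets \<open>U\<^sub>l\<close> to nested
  sets of measure exactly \<open>\<gamma>\<^sub>l\<close> at a cost of \<open>2\<^sup>l\<close> times the error in symmetric difference.\<close>

section \<open>Finite measurable partitions\<close>

definition finite_measurable_partition :: "'a measure \<Rightarrow> ('a \<Rightarrow> 'i) \<Rightarrow> 'i set \<Rightarrow> bool" where
  "finite_measurable_partition M c I \<longleftrightarrow>
     finite I \<and> (\<forall>x\<in>space M. c x \<in> I) \<and> (\<forall>i\<in>I. c -` {i} \<inter> space M \<in> sets M)"

lemma finite_measurable_partition_refine:
  assumes c: "finite_measurable_partition M c I"
    and P: "\<And>i r. i \<in> I \<Longrightarrow> r < n \<Longrightarrow> P i r \<in> sets M"
    and disj: "\<And>i. i \<in> I \<Longrightarrow> disjoint_family_on (P i) {..<n}"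
    and cover: "\<And>i. i \<in> I \<Longrightarrow> (\<Union>r<n. P i r) = c -` {i} \<inter> space M"
  obtains c' :: "'a \<Rightarrow> 'i \<times> nat"
  where "finite_measurable_partition M c' (I \<times> {..<n})"
    and "\<And>i r. i \<in> I \<Longrightarrow> r < n \<Longrightarrow> c' -` {(i, r)} \<inter> space M = P i r"
    and "\<And>x. fst (c' x) = c x"
proof -
  define c' where "c' x = (c x, SOME r. r < n \<and> x \<in> P (c x) r)" for x
  have c': "snd (c' x) < n \<and> x \<in> P (c x) (snd (c' x))" if "x \<in> space M" for x
  proof -
    have "c x \<in> I"
      using c that by (simp add: finite_measurable_partition_def)
    then have "x \<in> (\<Union>r<n. P (c x) r)"
      using cover that by blast
    then have "\<exists>r. r < n \<and> x \<in> P (c x) r"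
      by blast
    then show ?thesis
      unfolding c'_def snd_conv by (rule someI_ex)
  qed
  have preimage_c': "c' -` {(i, r)} \<inter> space M = P i r" if "i \<in> I" "r < n" for i r
  proof
    show "c' -` {(i, r)} \<inter> space M \<subseteq> P i r"
      using c' by (auto simp: c'_def)
    show "P i r \<subseteq> c' -` {(i, r)} \<inter> space M"
    proof
      fix x assume x: "x \<in> P i r"
      then have x_cell: "x \<in> space M" "c x = i"
        using cover[OF that(1)] that(2) by blast+
      then have "snd (c' x) = r"
        using c'[of x] disj[OF that(1)] that x unfolding disjoint_family_on_def by blast
      then show "x \<in> c' -` {(i, r)} \<inter> space M"
        using x_cell by (simp add: c'_def)
    qed
  qed
  have "c' x \<in> I \<times> {..<n}" if "x \<in> space M" for x
    using c c'[OF that] that by (auto simp: finite_measurable_partition_def c'_def)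
  moreover have "c' -` {j} \<inter> space M \<in> sets M" if "j \<in> I \<times> {..<n}" for j
    using that preimage_c' P by auto
  ultimately have "finite_measurable_partition M c' (I \<times> {..<n})"
    using c by (simp add: finite_measurable_partition_def)
  then show thesis
    using that preimage_c' by (simp add: c'_def)
qed

lemma sets_same_cell:
  assumes c: "finite_measurable_partition M c I" and f: "f \<in> measurable M M"
  shows "{x \<in> space M. c (f x) = c x} \<in> sets M"
proof -
  have "{x \<in> space M. c (f x) = c x} = (\<Union>i\<in>I. (f -` (c -` {i} \<inter> space M) \<inter> space M) \<inter> (c -` {i} \<inter> space M))"
    using c measurable_space[OF f] by (auto simp: finite_measurable_partition_def)
  moreover have "(f -` (c -` {i} \<inter> space M) \<inter> space M) \<inter> (c -` {i} \<inter> space M) \<in> sets M" if "i \<in> I" for i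
  proof -
    have cell: "c -` {i} \<inter> space M \<in> sets M"
      using c that by (simp add: finite_measurable_partition_def)
    show ?thesis
      by (rule sets.Int[OF measurable_sets[OF f cell] cell])
  qed
  then have "(\<Union>i\<in>I. (f -` (c -` {i} \<inter> space M) \<inter> space M) \<inter> (c -` {i} \<inter> space M)) \<in> sets M"
    using c unfolding finite_measurable_partition_def by (intro sets.finite_UN) auto
  ultimately show ?thesis
    by simp
qed

section \<open>Non-atomic probability spaces\<close>

locale nonatomic_prob_space = prob_space M for M :: "'a measure" +
  assumes non_atomic: "non_atomic M"
begin

lemma exists_subset_measure_le_half:
  assumes A: "A \<in> sets M" "0 < measure M A"
  obtains B where "B \<in> sets M" "B \<subseteq> A" "0 < measure M B" "measure M B \<le> measure M A / 2"
proof -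
  obtain C where C: "C \<in> sets M" "C \<subseteq> A" "0 < measure M C" "measure M C < measure M A"
    using non_atomic A unfolding non_atomic_def by blast
  have "measure M (A - C) = measure M A - measure M C"
    using C A by (simp add: finite_measure_Diff)
  then show thesis
    using that[of C] that[of "A - C"] C A by (cases "measure M C \<le> measure M A / 2") auto
qed

lemma exists_subset_small_measure:
  assumes A: "A \<in> sets M" "0 < measure M A" and e: "0 < e"
  obtains B where "B \<in> sets M" "B \<subseteq> A" "0 < measure M B" "measure M B \<le> e"
proof -
  have "\<exists>B\<in>sets M. B \<subseteq> A \<and> 0 < measure M B \<and> measure M B \<le> 1 / 2 ^ n" for n
  proof (induction n)
    case 0
    then show ?case using A by (intro bexI[of _ A]) auto
  next
    case (Suc n)
    then obtain B where B: "B \<in> sets M" "B \<subseteq> A" "0 < measure M B" "measure M B \<le> 1 / 2 ^ n"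
      by blast
    then obtain C where "C \<in> sets M" "C \<subseteq> B" "0 < measure M C" "measure M C \<le> measure M B / 2"
      using exists_subset_measure_le_half by blast
    then show ?case using B by (intro bexI[of _ C]) auto
  qed
  moreover obtain n where "1 / 2 ^ n < e"
    using real_arch_pow_inv[OF e, of "1 / 2"] by (auto simp: power_one_over)
  ultimately show thesis
    using that by (meson less_imp_le order_trans)
qed

definition admissible_increment :: "'a set \<Rightarrow> real \<Rightarrow> 'a set \<Rightarrow> 'a set \<Rightarrow> bool" where
  "admissible_increment A t S C \<longleftrightarrow> C \<in> sets M \<and> C \<subseteq> A - S \<and> measure M C \<le> t - measure M S"

definition largest_increment :: "'a set \<Rightarrow> real \<Rightarrow> 'a set \<Rightarrow> real" where
  "largest_increment A t S = Sup (measure M ` Collect (admissible_increment A t S))"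

lemma measure_le_largest_increment:
  "admissible_increment A t S C \<Longrightarrow> measure M C \<le> largest_increment A t S"
  unfolding largest_increment_def
  by (rule cSup_upper) (auto intro!: bdd_aboveI[of _ 1])

lemma exists_half_largest_increment:
  assumes "measure M S \<le> t"
  shows "\<exists>C. admissible_increment A t S C \<and> largest_increment A t S / 2 \<le> measure M C"
proof (cases "0 < largest_increment A t S")
  case True
  have "admissible_increment A t S {}"
    using assms by (simp add: admissible_increment_def)
  then have "Collect (admissible_increment A t S) \<noteq> {}"
    by blast
  moreover have "largest_increment A t S / 2 < largest_increment A t S"
    using True by simp
  moreover have "bdd_above (measure M ` Collect (admissible_increment A t S))"
    by (auto intro!: bdd_aboveI[of _ 1])
  ultimately show ?thesis
    unfolding largest_increment_def by (subst (asm) less_cSup_iff) (auto intro: less_imp_le)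
next
  case False
  then show ?thesis
    using assms by (intro exI[of _ "{}"]) (auto simp: admissible_increment_def)
qed

definition greedy_increment :: "'a set \<Rightarrow> real \<Rightarrow> 'a set \<Rightarrow> 'a set" where
  "greedy_increment A t S =
     (SOME C. admissible_increment A t S C \<and> largest_increment A t S / 2 \<le> measure M C)"

primrec greedy_approx :: "'a set \<Rightarrow> real \<Rightarrow> nat \<Rightarrow> 'a set" where
  "greedy_approx A t 0 = {}"
| "greedy_approx A t (Suc n) = greedy_approx A t n \<union> greedy_increment A t (greedy_approx A t n)"

lemma greedy_approx:
  assumes "0 \<le> t"
  shows "admissible_increment A t (greedy_approx A t n) (greedy_increment A t (greedy_approx A t n))"
    and "largest_increment A t (greedy_approx A t n) / 2
           \<le> measure M (greedy_increment A t (greedy_approx A t n))"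
    and "measure M (greedy_approx A t (Suc n))
           = measure M (greedy_approx A t n) + measure M (greedy_increment A t (greedy_approx A t n))"
    and "greedy_approx A t n \<in> sets M \<and> greedy_approx A t n \<subseteq> A \<and> measure M (greedy_approx A t n) \<le> t"
proof -
  let ?S = "greedy_approx A t" and ?C = "\<lambda>n. greedy_increment A t (greedy_approx A t n)"
  have step: "admissible_increment A t (?S n) (?C n) \<and> largest_increment A t (?S n) / 2 \<le> measure M (?C n)"
    if "measure M (?S n) \<le> t" for n
    unfolding greedy_increment_def by (rule someI_ex[OF exists_half_largest_increment[OF that]])
  have add: "measure M (?S (Suc n)) = measure M (?S n) + measure M (?C n)"
    if "?S n \<in> sets M" "measure M (?S n) \<le> t" for n
    using step[OF that(2)] that by (auto simp: admissible_increment_def intro!: finite_measure_Union)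
  have inv: "?S n \<in> sets M \<and> ?S n \<subseteq> A \<and> measure M (?S n) \<le> t" for n
  proof (induction n)
    case 0
    then show ?case using assms by simp
  next
    case (Suc n)
    then show ?case
      using step[of n] add[of n] by (auto simp: admissible_increment_def)
  qed
  show "admissible_increment A t (?S n) (?C n)" "largest_increment A t (?S n) / 2 \<le> measure M (?C n)"
    using step inv by blast+
  show "measure M (?S (Suc n)) = measure M (?S n) + measure M (?C n)"
    using add inv by blast
  show "?S n \<in> sets M \<and> ?S n \<subseteq> A \<and> measure M (?S n) \<le> t"
    by (rule inv)
qed

text \<open>The greedy union \<open>B\<close> has measure at most \<open>t\<close>; if it fell short, a small
  set in \<open>A - B\<close> would be admissible at every stage, so the increments could not tend to \<open>0\<close>.\<close>

lemma exists_subset_measure_eq: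
  assumes A: "A \<in> sets M" and t: "0 \<le> t" "t \<le> measure M A"
  obtains B where "B \<in> sets M" "B \<subseteq> A" "measure M B = t"
proof -
  define S where "S = greedy_approx A t"
  define C where "C n = greedy_increment A t (S n)" for n
  note greedy = greedy_approx[OF t(1), of A, folded S_def, folded C_def]
  define B where "B = (\<Union>n. S n)"
  have B: "B \<in> sets M" "B \<subseteq> A"
    using greedy(4) by (auto simp: B_def)
  have "incseq S"
    by (rule incseq_SucI) (simp add: S_def)
  then have lim: "(\<lambda>n. measure M (S n)) \<longlonglongrightarrow> measure M B"
    unfolding B_def using greedy(4) by (intro finite_Lim_measure_incseq) auto
  have "measure M B \<le> t"
    using greedy(4) by (intro LIMSEQ_le_const2[OF lim]) auto
  moreover have "\<not> measure M B < t"
  proof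
    assume lt: "measure M B < t"
    have "measure M (A - B) = measure M A - measure M B"
      using A B by (simp add: finite_measure_Diff)
    then obtain D where D: "D \<in> sets M" "D \<subseteq> A - B" "0 < measure M D" "measure M D \<le> t - measure M B"
      using exists_subset_small_measure[of "A - B" "t - measure M B"] A B lt t by auto
    have admissible: "admissible_increment A t (S n) D" for n
    proof -
      have "measure M (S n) \<le> measure M B"
        using B greedy(4) by (intro finite_measure_mono) (auto simp: B_def)
      then show ?thesis
        using D by (auto simp: admissible_increment_def B_def)
    qed
    have big: "measure M D / 2 \<le> measure M (C n)" for n
      using measure_le_largest_increment[OF admissible[of n]] greedy(2)[of n] by (simp add: C_def)
    have "(\<lambda>n. measure M (S (Suc n)) - measure M (S n)) \<longlonglongrightarrow> measure M B - measure M B"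
      by (intro tendsto_diff LIMSEQ_Suc lim)
    then have "(\<lambda>n. measure M (C n)) \<longlonglongrightarrow> 0"
      using greedy(3) by simp
    then have "eventually (\<lambda>n. measure M (C n) < measure M D / 2) sequentially"
      using D(3) by (intro order_tendstoD(2)) auto
    then show False
      using big by (auto simp: eventually_sequentially not_less[symmetric])
  qed
  ultimately show thesis
    using that B by force
qed

lemma exists_equal_measure_partition:
  fixes n :: nat
  assumes A: "A \<in> sets M" and n: "0 < n"
  shows "\<exists>P. (\<forall>r<n. P r \<in> sets M \<and> P r \<subseteq> A \<and> measure M (P r) = measure M A / n)
           \<and> disjoint_family_on P {..<n} \<and> (\<Union>r<n. P r) = A"
  using n A
proof (induction n arbitrary: A rule: nat_induct_non_zero)
  case 1
  then show ?case
    by (intro exI[of _ "\<lambda>_. A"]) (auto simp: disjoint_family_on_def)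
next
  case (Suc n)
  have "0 \<le> measure M A / Suc n" "measure M A / Suc n \<le> measure M A"
    by (auto simp: field_simps)
  then obtain Q where Q: "Q \<in> sets M" "Q \<subseteq> A" "measure M Q = measure M A / Suc n"
    using exists_subset_measure_eq[OF Suc.prems] by blast
  have "measure M (A - Q) / n = measure M A / Suc n"
    using Q Suc.prems \<open>0 < n\<close> by (simp add: finite_measure_Diff field_simps)
  moreover obtain P where P: "\<forall>r<n. P r \<in> sets M \<and> P r \<subseteq> A - Q \<and> measure M (P r) = measure M (A - Q) / n"
    "disjoint_family_on P {..<n}" "(\<Union>r<n. P r) = A - Q"
    using Suc.IH[of "A - Q"] Q Suc.prems by blast
  ultimately have "\<forall>r<Suc n. (P(n := Q)) r \<in> sets M \<and> (P(n := Q)) r \<subseteq> A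
      \<and> measure M ((P(n := Q)) r) = measure M A / Suc n"
    using Q by (auto simp: less_Suc_eq)
  moreover have "disjoint_family_on (P(n := Q)) {..<Suc n}"
    using P(1,2) unfolding disjoint_family_on_def by (auto simp: less_Suc_eq) blast
  moreover have "(\<Union>r<Suc n. (P(n := Q)) r) = A"
    using P(3) Q(2) by (auto simp: lessThan_Suc)
  ultimately show ?case
    by blast
qed

lemma refine_partition_small_cells:
  assumes c: "finite_measurable_partition M c I" and \<delta>: "0 < \<delta>"
  obtains c' :: "'a \<Rightarrow> 'i \<times> nat" and I'
  where "finite_measurable_partition M c' I'"
    and "\<And>j. j \<in> I' \<Longrightarrow> measure M (c' -` {j} \<inter> space M) \<le> \<delta>"
    and "\<And>x. fst (c' x) = c x"
proof -
  obtain n :: nat where "1 / \<delta> < n"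
    using reals_Archimedean2 by blast
  moreover from this have "0 < real n"
    using \<delta> by (smt (verit) zero_less_divide_1_iff)
  ultimately have n: "0 < n" "1 / n \<le> \<delta>"
    using \<delta> by (auto simp: field_simps)
  define cell where "cell i = c -` {i} \<inter> space M" for i
  have "\<forall>i\<in>I. \<exists>P. (\<forall>r<n. P r \<in> sets M \<and> P r \<subseteq> cell i \<and> measure M (P r) = measure M (cell i) / n)
        \<and> disjoint_family_on P {..<n} \<and> (\<Union>r<n. P r) = cell i"
  proof
    fix i assume "i \<in> I"
    then have "cell i \<in> sets M"
      using c by (simp add: finite_measurable_partition_def cell_def)
    then show "\<exists>P. (\<forall>r<n. P r \<in> sets M \<and> P r \<subseteq> cell i \<and> measure M (P r) = measure M (cell i) / n)
        \<and> disjoint_family_on P {..<n} \<and> (\<Union>r<n. P r) = cell i"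
      by (rule exists_equal_measure_partition[OF _ n(1)])
  qed
  then have "\<exists>P. \<forall>i\<in>I. (\<forall>r<n. P i r \<in> sets M \<and> P i r \<subseteq> cell i
        \<and> measure M (P i r) = measure M (cell i) / n)
        \<and> disjoint_family_on (P i) {..<n} \<and> (\<Union>r<n. P i r) = cell i"
    by (rule bchoice)
  then obtain P where P: "\<forall>i\<in>I. (\<forall>r<n. P i r \<in> sets M \<and> P i r \<subseteq> cell i
        \<and> measure M (P i r) = measure M (cell i) / n)
        \<and> disjoint_family_on (P i) {..<n} \<and> (\<Union>r<n. P i r) = cell i"
    by blast
  obtain c' where c': "finite_measurable_partition M c' (I \<times> {..<n})"
    and cells: "\<And>i r. i \<in> I \<Longrightarrow> r < n \<Longrightarrow> c' -` {(i, r)} \<inter> space M = P i r"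
    and refines: "\<And>x. fst (c' x) = c x"
    using finite_measurable_partition_refine[OF c, of n P] P by (auto simp: cell_def)
  have "measure M (c' -` {j} \<inter> space M) \<le> 1 / n" if "j \<in> I \<times> {..<n}" for j
    using that cells P by (auto intro!: divide_right_mono)
  then show thesis
    using that[OF c' _ refines] n by force
qed

lemma exists_subset_measure_eq_close:
  assumes W: "W \<in> sets M" and U: "U \<in> sets M" and g: "0 \<le> g" "g \<le> measure M W"
  obtains V where "V \<in> sets M" "V \<subseteq> W" "measure M V = g"
    "measure M (sym_diff V U) \<le> 2 * measure M (U - W) + \<bar>measure M U - g\<bar>"
proof -
  define A where "A = U \<inter> W"
  have A: "A \<in> sets M" "measure M A = measure M U - measure M (U - W)"
  proof -
    have "U = A \<union> (U - W)" "A \<inter> (U - W) = {}"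
      by (auto simp: A_def)
    then show "A \<in> sets M" "measure M A = measure M U - measure M (U - W)"
      using U W finite_measure_Union[of A "U - W"] by (auto simp: A_def)
  qed
  show thesis
  proof (cases "g \<le> measure M A")
    case True
    then obtain V where V: "V \<in> sets M" "V \<subseteq> A" "measure M V = g"
      using exists_subset_measure_eq[OF A(1) g(1)] by blast
    moreover have "sym_diff V U = U - V"
      using V by (auto simp: A_def)
    ultimately have "measure M (sym_diff V U) = measure M U - g"
      using U V by (simp add: finite_measure_Diff A_def)
    also have "\<dots> \<le> 2 * measure M (U - W) + \<bar>measure M U - g\<bar>"
      using measure_nonneg[of M "U - W"] by linarith
    finally show thesis
      by (intro that[OF V(1) _ V(3)]) (use V(2) in \<open>auto simp: A_def\<close>)
  next
    case False
    have "measure M (W - A) = measure M W - measure M A"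
      using W A by (simp add: A_def finite_measure_Diff)
    then obtain B where B: "B \<in> sets M" "B \<subseteq> W - A" "measure M B = g - measure M A"
      using exists_subset_measure_eq[of "W - A" "g - measure M A"] False g W A by auto
    have "A \<union> B \<subseteq> W" "measure M (A \<union> B) = g"
      using A B finite_measure_Union[of A B] by (auto simp: A_def)
    have "sym_diff (A \<union> B) U = B \<union> (U - W)"
      using B by (auto simp: A_def)
    then have "measure M (sym_diff (A \<union> B) U) \<le> measure M B + measure M (U - W)"
      using B U W measure_Un_le[of B M "U - W"] by simp
    also have "\<dots> \<le> 2 * measure M (U - W) + \<bar>measure M U - g\<bar>"
      using A B by simp
    finally show thesis
      using A B by (intro that[OF _ \<open>A \<union> B \<subseteq> W\<close> \<open>measure M (A \<union> B) = g\<close>]) auto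
  qed
qed

lemma exists_nested_sets_exact_measures:
  fixes U :: "nat \<Rightarrow> 'a set" and g :: "nat \<Rightarrow> real"
  assumes U: "\<And>l. U l \<in> sets M" "U 0 = space M" "\<And>l. U (Suc l) \<subseteq> U l"
    and g0: "g 0 = 1"
    and near: "\<And>l. l \<in> {1..L} \<Longrightarrow> \<bar>measure M (U l) - g l\<bar> \<le> d"
    and g: "\<And>l. l < L \<Longrightarrow> g (Suc l) < g l" "0 \<le> g L"
  shows "\<exists>V. (\<forall>l<L. V (Suc l) \<subseteq> V l) \<and> (\<forall>l\<le>L. V l \<in> sets M \<and> measure M (V l) = g l
           \<and> measure M (sym_diff (V l) (U l)) \<le> (2 ^ l - 1) * d)"
  using near g
proof (induction L)
  case 0
  then show ?case
    using U(2) g0 by (intro exI[of _ "\<lambda>_. space M"]) (simp add: prob_space)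
next
  case (Suc L)
  have "0 \<le> g (Suc L)" "g (Suc L) < g L"
    using Suc.prems(2,3) by auto
  moreover obtain V where V: "\<forall>l<L. V (Suc l) \<subseteq> V l" "\<forall>l\<le>L. V l \<in> sets M \<and> measure M (V l) = g l
      \<and> measure M (sym_diff (V l) (U l)) \<le> (2 ^ l - 1) * d"
    using Suc.IH Suc.prems calculation by fastforce
  moreover have VL: "V L \<in> sets M" "measure M (V L) = g L"
    using V(2) by auto
  ultimately obtain W where W: "W \<in> sets M" "W \<subseteq> V L" "measure M W = g (Suc L)"
    "measure M (sym_diff W (U (Suc L))) \<le> 2 * measure M (U (Suc L) - V L) + \<bar>measure M (U (Suc L)) - g (Suc L)\<bar>"
    using exists_subset_measure_eq_close[OF VL(1) U(1)] by (metis less_imp_le)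
  have "measure M (U (Suc L) - V L) \<le> measure M (sym_diff (V L) (U L))"
    using U V(2) by (intro finite_measure_mono) auto
  then have "measure M (sym_diff W (U (Suc L))) \<le> 2 * ((2 ^ L - 1) * d) + d"
    using W(4) V(2) Suc.prems(1)[of "Suc L"] by fastforce
  also have "\<dots> = (2 ^ Suc L - 1) * d"
    by (simp add: algebra_simps)
  finally show ?case
    using V W by (intro exI[of _ "V(Suc L := W)"]) (auto simp: le_Suc_eq less_Suc_eq)
qed

end

section \<open>Independent random labellings\<close>

definition product_expectation :: "'i set \<Rightarrow> 'v set \<Rightarrow> ('v \<Rightarrow> real) \<Rightarrow> (('i \<Rightarrow> 'v) \<Rightarrow> real) \<Rightarrow> real" where
  "product_expectation I V p G = (\<Sum>z\<in>PiE I (\<lambda>_. V). (\<Prod>i\<in>I. p (z i)) * G z)"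

lemma product_expectation_add:
  "product_expectation I V p (\<lambda>z. F z + G z) = product_expectation I V p F + product_expectation I V p G"
  unfolding product_expectation_def by (simp add: distrib_left sum.distrib)

lemma product_expectation_diff:
  "product_expectation I V p (\<lambda>z. F z - G z) = product_expectation I V p F - product_expectation I V p G"
  unfolding product_expectation_def by (simp add: right_diff_distrib sum_subtractf)

lemma product_expectation_cmult:
  "product_expectation I V p (\<lambda>z. a * F z) = a * product_expectation I V p F"
  unfolding product_expectation_def by (simp add: sum_distrib_left ac_simps)

lemma product_expectation_sum:
  "product_expectation I V p (\<lambda>z. \<Sum>s\<in>S. F s z) = (\<Sum>s\<in>S. product_expectation I V p (F s))"
  unfolding product_expectation_def by (simp add: sum_distrib_left sum.swap[of _ S])

lemma product_expectation_mono:
  assumes "\<And>v. v \<in> V \<Longrightarrow> 0 \<le> p v" "\<And>z. z \<in> PiE I (\<lambda>_. V) \<Longrightarrow> F z \<le> G z"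
  shows "product_expectation I V p F \<le> product_expectation I V p G"
  unfolding product_expectation_def
  using assms by (intro sum_mono mult_left_mono prod_nonneg) (auto simp: PiE_def Pi_def)

lemma product_expectation_prod:
  fixes h :: "'j \<Rightarrow> 'v \<Rightarrow> real" and g :: "'j \<Rightarrow> 'i"
  assumes I: "finite I" and J: "finite J" "inj_on g J" "g ` J \<subseteq> I" and p: "sum p V = 1"
  shows "product_expectation I V p (\<lambda>z. \<Prod>j\<in>J. h j (z (g j))) = (\<Prod>j\<in>J. \<Sum>v\<in>V. p v * h j v)"
proof -
  define H where "H i v = (if i \<in> g ` J then h (inv_into J g i) v else 1)" for i v
  have "(\<Prod>j\<in>J. h j (z (g j))) = (\<Prod>i\<in>I. H i (z i))" for z :: "'i \<Rightarrow> 'v"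
  proof -
    have "(\<Prod>i\<in>I. H i (z i)) = (\<Prod>i\<in>g ` J. H i (z i))"
      using J I by (intro prod.mono_neutral_right) (auto simp: H_def)
    also have "\<dots> = (\<Prod>j\<in>J. h j (z (g j)))"
      using J by (simp add: prod.reindex H_def)
    finally show ?thesis ..
  qed
  then have "product_expectation I V p (\<lambda>z. \<Prod>j\<in>J. h j (z (g j)))
      = (\<Sum>z\<in>PiE I (\<lambda>_. V). \<Prod>i\<in>I. p (z i) * H i (z i))"
    unfolding product_expectation_def by (simp add: prod.distrib)
  also have "\<dots> = (\<Prod>i\<in>I. \<Sum>v\<in>V. p v * H i v)"
    using I p sum.infinite[of V p] by (intro prod_sum_PiE[symmetric]) auto
  also have "\<dots> = (\<Prod>i\<in>g ` J. \<Sum>v\<in>V. p v * H i v)"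
    using J I p by (intro prod.mono_neutral_left[symmetric]) (auto simp: H_def)
  also have "\<dots> = (\<Prod>j\<in>J. \<Sum>v\<in>V. p v * h j v)"
    using J by (simp add: prod.reindex H_def)
  finally show ?thesis .
qed

lemma product_expectation_const:
  assumes "finite I" "sum p V = 1"
  shows "product_expectation I V p (\<lambda>_. c) = c"
  using product_expectation_prod[of I "{}" "\<lambda>_. undefined" p V] product_expectation_cmult[of I V p c "\<lambda>_. 1"]
    assms by simp

lemma exists_le_product_expectation:
  assumes I: "finite I" and V: "finite V" and p: "\<And>v. v \<in> V \<Longrightarrow> 0 \<le> p v" "sum p V = 1"
  obtains z where "z \<in> PiE I (\<lambda>_. V)" "F z \<le> product_expectation I V p F"
proof -
  have "V \<noteq> {}"
    using p(2) by auto
  then have "PiE I (\<lambda>_. V) \<noteq> {}" "finite (PiE I (\<lambda>_. V))"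
    using I V by (auto simp: PiE_eq_empty_iff finite_PiE)
  then have "Min (F ` PiE I (\<lambda>_. V)) \<in> F ` PiE I (\<lambda>_. V)"
    by (intro Min_in) auto
  then obtain z where z: "z \<in> PiE I (\<lambda>_. V)" "F z = Min (F ` PiE I (\<lambda>_. V))"
    by (metis imageE)
  have "F z = product_expectation I V p (\<lambda>_. F z)"
    using I p by (simp add: product_expectation_const)
  also have "\<dots> \<le> product_expectation I V p F"
    using z p by (intro product_expectation_mono) (auto simp: \<open>finite (PiE I (\<lambda>_. V))\<close>)
  finally show thesis
    using that z(1) by blast
qed

definition pattern_indicator :: "'j set \<Rightarrow> ('j \<Rightarrow> 'v set) \<Rightarrow> ('i \<Rightarrow> 'v) \<Rightarrow> ('j \<Rightarrow> 'i) \<Rightarrow> real" where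
  "pattern_indicator J Q z t = (\<Prod>j\<in>J. of_bool (z (t j) \<in> Q j))"

definition pattern_prob :: "('v \<Rightarrow> real) \<Rightarrow> 'v set \<Rightarrow> 'j set \<Rightarrow> ('j \<Rightarrow> 'v set) \<Rightarrow> real" where
  "pattern_prob p V J Q = (\<Prod>j\<in>J. sum p (V \<inter> Q j))"

lemma pattern_indicator_eq: "finite J \<Longrightarrow> pattern_indicator J Q z t = of_bool (\<forall>j\<in>J. z (t j) \<in> Q j)"
  unfolding pattern_indicator_def by (induction J rule: finite_induct) auto

lemma pattern_indicator_bounds: "0 \<le> pattern_indicator J Q z t" "pattern_indicator J Q z t \<le> 1"
  unfolding pattern_indicator_def by (auto intro: prod_nonneg prod_le_1)

lemma pattern_prob_bounds:
  assumes "\<And>v. v \<in> V \<Longrightarrow> 0 \<le> p v" "sum p V = 1"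
  shows "0 \<le> pattern_prob p V J Q" "pattern_prob p V J Q \<le> 1"
proof -
  have "finite V"
    using assms(2) sum.infinite by force
  then have "0 \<le> sum p (V \<inter> Q j) \<and> sum p (V \<inter> Q j) \<le> 1" for j
    using assms sum_mono2[of V "V \<inter> Q j" p] by (auto intro: sum_nonneg)
  then show "0 \<le> pattern_prob p V J Q" "pattern_prob p V J Q \<le> 1"
    unfolding pattern_prob_def by (auto intro: prod_nonneg prod_le_1)
qed

lemma product_expectation_prod_of_bool:
  assumes "finite I" "finite J" "inj_on g J" "g ` J \<subseteq> I" "sum p V = 1"
  shows "product_expectation I V p (\<lambda>z. \<Prod>j\<in>J. of_bool (z (g j) \<in> Q j)) = (\<Prod>j\<in>J. sum p (V \<inter> Q j))"
proof -
  have "finite V"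
    using assms(5) sum.infinite by force
  then have "(\<Sum>v\<in>V. p v * of_bool (v \<in> Q j)) = sum p (V \<inter> Q j)" for j
    by (simp add: sum.inter_restrict of_bool_def if_distrib cong: if_cong)
  then show ?thesis
    using product_expectation_prod[OF assms, of "\<lambda>j v. of_bool (v \<in> Q j)"] by simp
qed

lemma product_expectation_pattern_indicator:
  assumes "finite I" "finite J" "inj_on t J" "t ` J \<subseteq> I" "sum p V = 1"
  shows "product_expectation I V p (\<lambda>z. pattern_indicator J Q z t) = pattern_prob p V J Q"
  unfolding pattern_indicator_def pattern_prob_def by (rule product_expectation_prod_of_bool[OF assms])

lemma product_expectation_pattern_indicator_mult:
  assumes I: "finite I" and J: "finite J" and t: "inj_on t J" "t ` J \<subseteq> I"
    and t': "inj_on t' J" "t' ` J \<subseteq> I" and disj: "t ` J \<inter> t' ` J = {}" and p: "sum p V = 1"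
  shows "product_expectation I V p (\<lambda>z. pattern_indicator J Q z t * pattern_indicator J Q z t')
    = pattern_prob p V J Q * pattern_prob p V J Q"
proof -
  have "t a \<noteq> t' b" "t' b \<noteq> t a" if "a \<in> J" "b \<in> J" for a b
    using disj that by blast+
  then have "inj_on (case_sum t t') (J <+> J)"
    unfolding inj_on_def
    by (intro ballI impI, elim PlusE) (auto simp: inj_on_eq_iff[OF t(1)] inj_on_eq_iff[OF t'(1)])
  moreover have "case_sum t t' ` (J <+> J) \<subseteq> I"
    using t t' by auto
  ultimately show ?thesis
    using product_expectation_prod_of_bool[of I "J <+> J" "case_sum t t'" p V "case_sum Q Q"] I J p
    by (simp add: pattern_indicator_def pattern_prob_def prod.Plus o_def)
qed

lemma product_expectation_pattern_covariance_independent: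
  assumes I: "finite I" and J: "finite J" and t: "inj_on t J" "t ` J \<subseteq> I"
    and t': "inj_on t' J" "t' ` J \<subseteq> I" and disj: "t ` J \<inter> t' ` J = {}" and p: "sum p V = 1"
  shows "product_expectation I V p (\<lambda>z. (pattern_indicator J Q z t - pattern_prob p V J Q)
    * (pattern_indicator J Q z t' - pattern_prob p V J Q)) = 0"
proof -
  define q where "q = pattern_prob p V J Q"
  let ?E = "product_expectation I V p"
  have "?E (\<lambda>z. (pattern_indicator J Q z t - q) * (pattern_indicator J Q z t' - q))
      = ?E (\<lambda>z. pattern_indicator J Q z t * pattern_indicator J Q z t')
      - q * ?E (\<lambda>z. pattern_indicator J Q z t) - q * ?E (\<lambda>z. pattern_indicator J Q z t') + q * q"
    using I p by (simp add: algebra_simps product_expectation_add product_expectation_diff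
        product_expectation_cmult product_expectation_const)
  also have "\<dots> = 0"
    using I J t t' disj p unfolding q_def
    by (simp add: product_expectation_pattern_indicator product_expectation_pattern_indicator_mult)
  finally show ?thesis
    by (simp add: q_def)
qed

lemma product_expectation_pattern_covariance_le_1:
  fixes p :: "'v \<Rightarrow> real" and t t' :: "'j \<Rightarrow> 'i"
  assumes I: "finite I" and p: "\<And>v. v \<in> V \<Longrightarrow> 0 \<le> p v" "sum p V = 1"
  shows "product_expectation I V p (\<lambda>z. (pattern_indicator J Q z t - pattern_prob p V J Q)
    * (pattern_indicator J Q z t' - pattern_prob p V J Q)) \<le> 1"
proof -
  have "product_expectation I V p (\<lambda>z. (pattern_indicator J Q z t - pattern_prob p V J Q)
      * (pattern_indicator J Q z t' - pattern_prob p V J Q)) \<le> product_expectation I V p (\<lambda>_. 1)"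
  proof (rule product_expectation_mono[OF p(1)])
    fix z :: "'i \<Rightarrow> 'v"
    have "\<bar>pattern_indicator J Q z u - pattern_prob p V J Q\<bar> \<le> 1" for u
      using pattern_indicator_bounds[of J Q z u] pattern_prob_bounds[OF p, of J Q]
      unfolding abs_le_iff by linarith
    then have "\<bar>pattern_indicator J Q z t - pattern_prob p V J Q\<bar>
        * \<bar>pattern_indicator J Q z t' - pattern_prob p V J Q\<bar> \<le> 1"
      by (intro mult_le_one) auto
    then show "(pattern_indicator J Q z t - pattern_prob p V J Q)
        * (pattern_indicator J Q z t' - pattern_prob p V J Q) \<le> 1"
      by (simp add: abs_mult[symmetric])
  qed
  then show ?thesis
    using I p by (simp add: product_expectation_const)
qed

lemma pattern_covariance_le:
  assumes I: "finite I" and J: "finite J" "t ` J \<subseteq> I" "t' ` J \<subseteq> I"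
    and p: "\<And>v. v \<in> V \<Longrightarrow> 0 \<le> p v" "sum p V = 1"
  shows "product_expectation I V p (\<lambda>z. (pattern_indicator J Q z t - pattern_prob p V J Q)
      * (pattern_indicator J Q z t' - pattern_prob p V J Q))
    \<le> of_bool (\<not> inj_on t J) + of_bool (\<not> inj_on t' J) + (\<Sum>j\<in>J. \<Sum>j'\<in>J. of_bool (t j = t' j'))"
    (is "?E \<le> ?B")
proof -
  have "0 \<le> (\<Sum>j\<in>J. \<Sum>j'\<in>J. of_bool (t j = t' j') :: real)"
    by (intro sum_nonneg) auto
  moreover have "1 \<le> ?B" if dependent: "\<not> (inj_on t J \<and> inj_on t' J \<and> t ` J \<inter> t' ` J = {})"
  proof (cases "inj_on t J \<and> inj_on t' J")
    case True
    then obtain j j' where "j \<in> J" "j' \<in> J" "t j = t' j'"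
      using dependent by blast
    then have "1 \<le> (\<Sum>b\<in>J. of_bool (t j = t' b) :: real)"
      using J member_le_sum[of j' J "\<lambda>b. of_bool (t j = t' b) :: real"] by simp
    also have "\<dots> \<le> (\<Sum>a\<in>J. \<Sum>b\<in>J. of_bool (t a = t' b))"
      using J \<open>j \<in> J\<close> by (intro member_le_sum[of j J "\<lambda>a. \<Sum>b\<in>J. of_bool (t a = t' b)"]) (auto intro: sum_nonneg)
    finally show ?thesis
      by simp
  qed (use \<open>0 \<le> (\<Sum>j\<in>J. \<Sum>j'\<in>J. of_bool (t j = t' j'))\<close> in auto)
  ultimately show ?thesis
  proof (cases "inj_on t J \<and> inj_on t' J \<and> t ` J \<inter> t' ` J = {}")
    case True
    then have "?E = 0"
      using J by (intro product_expectation_pattern_covariance_independent[OF I J(1) _ _ _ _ _ p(2)]) auto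
    then show ?thesis
      using \<open>0 \<le> (\<Sum>j\<in>J. \<Sum>j'\<in>J. of_bool (t j = t' j'))\<close> by simp
  next
    case False
    then show ?thesis
      using product_expectation_pattern_covariance_le_1[OF I p, of J Q t t'] \<open>\<not> _ \<Longrightarrow> 1 \<le> ?B\<close> by linarith
  qed
qed

definition pattern_mass :: "('j \<Rightarrow> 'i) set \<Rightarrow> (('j \<Rightarrow> 'i) \<Rightarrow> real) \<Rightarrow> 'j set \<Rightarrow> ('j \<Rightarrow> 'v set) \<Rightarrow> ('i \<Rightarrow> 'v) \<Rightarrow> real" where
  "pattern_mass T w J Q z = (\<Sum>t\<in>T. w t * pattern_indicator J Q z t)"

lemma product_expectation_square_sum:
  "product_expectation I V p (\<lambda>z. (\<Sum>t\<in>T. w t * D t z)\<^sup>2)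
    = (\<Sum>t\<in>T. \<Sum>t'\<in>T. w t * w t' * product_expectation I V p (\<lambda>z. D t z * D t' z))"
proof -
  have "(\<Sum>t\<in>T. w t * D t z)\<^sup>2 = (\<Sum>t\<in>T. \<Sum>t'\<in>T. w t * w t' * (D t z * D t' z))" for z
    by (simp add: power2_eq_square sum_product ac_simps)
  then show ?thesis
    by (simp add: product_expectation_sum product_expectation_cmult)
qed

lemma collision_weight_le:
  fixes w :: "('j \<Rightarrow> 'i) \<Rightarrow> real"
  assumes T: "finite T" "\<And>t j. t \<in> T \<Longrightarrow> j \<in> J \<Longrightarrow> t j \<in> I" and w: "\<And>t. 0 \<le> w t" "sum w T = 1"
    and marginal: "\<And>j i. j \<in> J \<Longrightarrow> i \<in> I \<Longrightarrow> sum w {t\<in>T. t j = i} \<le> \<delta>"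
  shows "(\<Sum>t\<in>T. \<Sum>t'\<in>T. w t * w t' * (\<Sum>j\<in>J. \<Sum>j'\<in>J. of_bool (t j = t' j'))) \<le> real (card J) ^ 2 * \<delta>"
proof -
  have pair: "(\<Sum>t\<in>T. \<Sum>t'\<in>T. w t * w t' * of_bool (t j = t' j')) \<le> \<delta>" if j: "j \<in> J" "j' \<in> J" for j j'
  proof -
    have "(\<Sum>t\<in>T. \<Sum>t'\<in>T. w t * w t' * of_bool (t j = t' j'))
        = (\<Sum>t\<in>T. w t * (\<Sum>t'\<in>T. w t' * of_bool (t j = t' j')))"
      by (simp add: sum_distrib_left mult.assoc)
    also have "\<dots> = (\<Sum>t\<in>T. w t * sum w {t'\<in>T. t' j' = t j})"
      unfolding sum.inter_filter[OF T(1)] by (intro sum.cong refl arg_cong2[where f = times]) auto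
    also have "\<dots> \<le> (\<Sum>t\<in>T. w t * \<delta>)"
      using T(2) w(1) marginal j by (intro sum_mono mult_left_mono) auto
    also have "\<dots> = \<delta>"
      using w(2) by (simp add: sum_distrib_right[symmetric])
    finally show ?thesis .
  qed
  have "(\<Sum>t\<in>T. \<Sum>t'\<in>T. w t * w t' * (\<Sum>j\<in>J. \<Sum>j'\<in>J. of_bool (t j = t' j')))
      = (\<Sum>t\<in>T. \<Sum>j\<in>J. \<Sum>j'\<in>J. \<Sum>t'\<in>T. w t * w t' * of_bool (t j = t' j'))"
    by (simp add: sum_distrib_left) (intro sum.cong refl, subst sum.swap, intro sum.cong refl sum.swap)
  also have "\<dots> = (\<Sum>j\<in>J. \<Sum>j'\<in>J. \<Sum>t\<in>T. \<Sum>t'\<in>T. w t * w t' * of_bool (t j = t' j'))"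
    by (subst sum.swap, intro sum.cong refl sum.swap)
  also have "\<dots> \<le> (\<Sum>j\<in>J. \<Sum>j'\<in>J. \<delta>)"
    using pair by (intro sum_mono) auto
  finally show ?thesis
    by (simp add: power2_eq_square)
qed

lemma pattern_mass_variance_le:
  fixes p :: "'v \<Rightarrow> real" and V :: "'v set" and J :: "'j set" and Q :: "'j \<Rightarrow> 'v set"
    and w :: "('j \<Rightarrow> 'i) \<Rightarrow> real"
  defines "q \<equiv> pattern_prob p V J Q"
  assumes I: "finite I" and J: "finite J" and T: "T = PiE J (\<lambda>_. I)"
    and p: "\<And>v. v \<in> V \<Longrightarrow> 0 \<le> p v" "sum p V = 1"
    and w: "\<And>t. 0 \<le> w t" "sum w T = 1"
    and marginal: "\<And>j i. j \<in> J \<Longrightarrow> i \<in> I \<Longrightarrow> sum w {t\<in>T. t j = i} \<le> \<delta>"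
    and non_inj: "sum w {t\<in>T. \<not> inj_on t J} \<le> \<epsilon>"
  shows "product_expectation I V p (\<lambda>z. (pattern_mass T w J Q z - q)\<^sup>2) \<le> 2 * \<epsilon> + real (card J) ^ 2 * \<delta>"
proof -
  define b where "b t = (of_bool (\<not> inj_on t J) :: real)" for t :: "'j \<Rightarrow> 'i"
  define C where "C t t' = (\<Sum>j\<in>J. \<Sum>j'\<in>J. of_bool (t j = t' j') :: real)" for t t' :: "'j \<Rightarrow> 'i"
  have finT: "finite T" and TI: "\<And>t j. t \<in> T \<Longrightarrow> j \<in> J \<Longrightarrow> t j \<in> I"
    using I J by (auto simp: T finite_PiE)
  have "pattern_mass T w J Q z - q = (\<Sum>t\<in>T. w t * (pattern_indicator J Q z t - q))" for z
    using w(2) by (simp add: pattern_mass_def right_diff_distrib sum_subtractf sum_distrib_right[symmetric])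
  then have "product_expectation I V p (\<lambda>z. (pattern_mass T w J Q z - q)\<^sup>2)
      = (\<Sum>t\<in>T. \<Sum>t'\<in>T. w t * w t'
          * product_expectation I V p (\<lambda>z. (pattern_indicator J Q z t - q) * (pattern_indicator J Q z t' - q)))"
    by (simp add: product_expectation_square_sum)
  also have "\<dots> \<le> (\<Sum>t\<in>T. \<Sum>t'\<in>T. w t * w t' * (b t + b t' + C t t'))"
    unfolding b_def C_def q_def
    using w(1) TI by (intro sum_mono mult_left_mono pattern_covariance_le[OF I J _ _ p]) auto
  also have "\<dots> = 2 * (\<Sum>t\<in>T. w t * b t) + (\<Sum>t\<in>T. \<Sum>t'\<in>T. w t * w t' * C t t')"
  proof -
    have "(\<Sum>t\<in>T. \<Sum>t'\<in>T. w t * w t' * b t) = (\<Sum>t\<in>T. w t * b t)"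
      using w(2) by (simp add: sum_distrib_left[symmetric] sum_distrib_right[symmetric] ac_simps)
    moreover have "(\<Sum>t\<in>T. \<Sum>t'\<in>T. w t * w t' * b t') = (\<Sum>t\<in>T. w t * b t)"
      using w(2) by (subst sum.swap) (simp add: sum_distrib_left[symmetric] sum_distrib_right[symmetric] ac_simps)
    ultimately show ?thesis
      by (simp add: distrib_left sum.distrib)
  qed
  also have "\<dots> \<le> 2 * \<epsilon> + real (card J) ^ 2 * \<delta>"
  proof (intro add_mono mult_left_mono)
    show "(\<Sum>t\<in>T. w t * b t) \<le> \<epsilon>"
      using non_inj finT by (simp add: b_def sum.inter_filter of_bool_def if_distrib cong: if_cong)
    show "(\<Sum>t\<in>T. \<Sum>t'\<in>T. w t * w t' * C t t') \<le> real (card J) ^ 2 * \<delta>"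
      unfolding C_def using finT TI w marginal by (intro collision_weight_le[where I = I]) auto
  qed simp
  finally show ?thesis .
qed

lemma exists_labelling_patterns_close:
  fixes p :: "'v \<Rightarrow> real" and J :: "'j set" and Q :: "'s \<Rightarrow> 'j \<Rightarrow> 'v set"
    and w :: "('j \<Rightarrow> 'i) \<Rightarrow> real"
  assumes I: "finite I" and V: "finite V" and J: "finite J" and T: "T = PiE J (\<lambda>_. I)"
    and p: "\<And>v. v \<in> V \<Longrightarrow> 0 \<le> p v" "sum p V = 1"
    and w: "\<And>t. 0 \<le> w t" "sum w T = 1"
    and marginal: "\<And>j i. j \<in> J \<Longrightarrow> i \<in> I \<Longrightarrow> sum w {t\<in>T. t j = i} \<le> \<delta>"
    and non_inj: "sum w {t\<in>T. \<not> inj_on t J} \<le> \<epsilon>"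
    and S: "finite S" and d: "0 \<le> d" "real (card S) * (2 * \<epsilon> + real (card J) ^ 2 * \<delta>) \<le> d\<^sup>2"
  obtains z where "\<And>s. s \<in> S \<Longrightarrow> \<bar>pattern_mass T w J (Q s) z - pattern_prob p V J (Q s)\<bar> \<le> d"
proof -
  define F where "F z = (\<Sum>s\<in>S. (pattern_mass T w J (Q s) z - pattern_prob p V J (Q s))\<^sup>2)" for z
  obtain z where z: "F z \<le> product_expectation I V p F"
    using exists_le_product_expectation[OF I V p] by blast
  have "product_expectation I V p F \<le> real (card S) * (2 * \<epsilon> + real (card J) ^ 2 * \<delta>)"
    unfolding F_def product_expectation_sum
    using sum_mono[OF pattern_mass_variance_le[OF I J T p w marginal non_inj]] by simp
  then have "(pattern_mass T w J (Q s) z - pattern_prob p V J (Q s))\<^sup>2 \<le> d\<^sup>2" if "s \<in> S" for s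
    using z d(2) member_le_sum[OF that, of "\<lambda>s. (pattern_mass T w J (Q s) z - pattern_prob p V J (Q s))\<^sup>2"] S
    unfolding F_def by force
  then have "\<bar>pattern_mass T w J (Q s) z - pattern_prob p V J (Q s)\<bar> \<le> d" if "s \<in> S" for s
    using that d(1) by (simp add: power2_le_iff_abs_le)
  then show thesis
    by (rule that)
qed

definition level_weights :: "(nat \<Rightarrow> real) \<Rightarrow> nat \<Rightarrow> nat \<Rightarrow> real" where
  "level_weights g L v = (if v < L then g v - g (Suc v) else if v = L then g L else 0)"

text \<open>A level pattern asks the label to be at least \<open>l\<close> (\<open>Some True\<close>), below \<open>l\<close> (\<open>Some False\<close>),
  or leaves it free (\<open>None\<close>); the free case lets one family of \<open>3\<^sup>L\<close> patterns control the single
  sets \<open>U\<^sub>l\<close> as well as the intersections.\<close>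

definition level_pattern :: "nat \<Rightarrow> bool option \<Rightarrow> nat set" where
  "level_pattern l e = (case e of None \<Rightarrow> UNIV | Some b \<Rightarrow> {v. l \<le> v \<longleftrightarrow> b})"

lemma level_weights_nonneg:
  assumes "\<And>l. l < L \<Longrightarrow> g (Suc l) \<le> g l" "0 \<le> g L"
  shows "0 \<le> level_weights g L v"
  using assms by (simp add: level_weights_def)

lemma sum_level_weights_atLeastAtMost:
  assumes "l \<le> L"
  shows "sum (level_weights g L) {l..L} = g l"
proof -
  have "sum (level_weights g L) {l..L} = (\<Sum>v=l..<L. g v - g (Suc v)) + g L"
    using assms by (simp add: atLeastLessThanSuc_atLeastAtMost[symmetric] level_weights_def)
  also have "(\<Sum>v=l..<L. g v - g (Suc v)) = - (\<Sum>v=l..<L. g (Suc v) - g v)"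
    by (simp add: sum_negf[symmetric])
  finally show ?thesis
    using sum_Suc_diff'[OF assms, of g] by simp
qed

lemma pattern_prob_level_pattern:
  assumes "g 0 = 1"
  shows "pattern_prob (level_weights g L) {0..L} {1..L} (\<lambda>l. level_pattern l (e l))
    = (\<Prod>l\<in>{1..L}. case e l of None \<Rightarrow> 1 | Some b \<Rightarrow> if b then g l else 1 - g l)"
  unfolding pattern_prob_def
proof (rule prod.cong[OF refl])
  fix l assume l: "l \<in> {1..L}"
  have total: "sum (level_weights g L) {0..L} = 1"
    using sum_level_weights_atLeastAtMost[of 0 L g] assms by simp
  have "{0..L} = {0..<l} \<union> {l..L}"
    using l by auto
  then have "sum (level_weights g L) {0..<l} = 1 - g l"
    using total sum_level_weights_atLeastAtMost[of l L g] l
    by (simp add: sum.union_disjoint ivl_disj_int(15))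
  moreover have "{0..L} \<inter> {v. l \<le> v} = {l..L}" "{0..L} \<inter> {v. \<not> l \<le> v} = {0..<l}"
    using l by auto
  ultimately show "sum (level_weights g L) ({0..L} \<inter> level_pattern l (e l))
      = (case e l of None \<Rightarrow> 1 | Some b \<Rightarrow> if b then g l else 1 - g l)"
    using total sum_level_weights_atLeastAtMost[of l L g] l
    by (cases "e l") (auto simp: level_pattern_def)
qed

section \<open>Invertible ergodic maps\<close>

lemma exists_separating_open_sequence:
  obtains B :: "nat \<Rightarrow> 'a::{second_countable_topology, t1_space} set"
  where "\<And>j. open (B j)" "\<And>x y. x \<noteq> y \<Longrightarrow> \<exists>j. x \<in> B j \<and> y \<notin> B j"
proof -
  obtain \<B> :: "'a set set" where \<B>: "countable \<B>" "topological_basis \<B>"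
    using ex_countable_basis by blast
  have "\<B> \<noteq> {}"
    using topological_basisE[OF \<B>(2) open_UNIV UNIV_I] by blast
  then have \<B>_range: "range (from_nat_into \<B>) = \<B>"
    using \<B>(1) by (rule range_from_nat_into)
  show thesis
  proof
    show "open (from_nat_into \<B> j)" for j
      using from_nat_into[OF \<open>\<B> \<noteq> {}\<close>] by (rule topological_basis_open[OF \<B>(2)])
    show "\<exists>j. x \<in> from_nat_into \<B> j \<and> y \<notin> from_nat_into \<B> j" if xy: "x \<noteq> y" for x y
    proof -
      obtain U where "open U" "x \<in> U" "y \<notin> U"
        using t1_space[OF xy] by blast
      then obtain W where "W \<in> \<B>" "x \<in> W" "W \<subseteq> U"
        using topological_basisE[OF \<B>(2)] by blast
      moreover obtain j where "W = from_nat_into \<B> j"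
        using \<B>_range \<open>W \<in> \<B>\<close> by blast
      ultimately show ?thesis
        using \<open>y \<notin> U\<close> by blast
    qed
  qed
qed

lemma ex_funpow_shift_periodic:
  assumes "(f ^^ k) x = x" "0 < k"
  shows "(\<exists>i<k. (f ^^ i) (f x) \<in> A) \<longleftrightarrow> (\<exists>i<k. (f ^^ i) x \<in> A)"
proof -
  have shift: "(f ^^ i) (f x) = (f ^^ Suc i) x" for i
    by (simp add: funpow_swap1)
  show ?thesis
  proof
    assume "\<exists>i<k. (f ^^ i) (f x) \<in> A"
    then obtain i where "i < k" "(f ^^ Suc i) x \<in> A"
      unfolding shift by blast
    show "\<exists>i<k. (f ^^ i) x \<in> A"
    proof (cases "Suc i = k")
      case True
      then show ?thesis
        using \<open>(f ^^ Suc i) x \<in> A\<close> assms by (intro exI[of _ 0]) simp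
    next
      case False
      then show ?thesis
        using \<open>i < k\<close> \<open>(f ^^ Suc i) x \<in> A\<close> by (intro exI[of _ "Suc i"]) simp
    qed
  next
    assume "\<exists>i<k. (f ^^ i) x \<in> A"
    then obtain i where i: "i < k" "(f ^^ i) x \<in> A"
      by blast
    show "\<exists>i<k. (f ^^ i) (f x) \<in> A"
    proof (cases i)
      case 0
      then have "(f ^^ (k - 1)) (f x) \<in> A"
        using i assms by (simp add: shift)
      then show ?thesis
        using assms(2) by (intro exI[of _ "k - 1"]) auto
    next
      case (Suc i')
      then show ?thesis
        using i by (intro exI[of _ i']) (auto simp: shift)
    qed
  qed
qed

lemma vimage_fixed_points:
  assumes "inj f"
  shows "f -` {x. (f ^^ k) x = x} = {x. (f ^^ k) x = x}"
  using assms by (auto simp: funpow_swap1[symmetric] inj_eq)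

lemma vimage_periodic_saturation:
  assumes f: "inj f" and k: "0 < k"
  shows "f -` ({x. (f ^^ k) x = x} \<inter> (\<Union>i<k. (f ^^ i) -` A)) = {x. (f ^^ k) x = x} \<inter> (\<Union>i<k. (f ^^ i) -` A)"
proof (rule set_eqI)
  fix x
  have "(f ^^ k) (f x) = f x \<longleftrightarrow> (f ^^ k) x = x"
    using vimage_fixed_points[OF f, of k] by blast
  moreover have "(f ^^ k) x = x \<Longrightarrow> (\<exists>i<k. (f ^^ i) (f x) \<in> A) \<longleftrightarrow> (\<exists>i<k. (f ^^ i) x \<in> A)"
    by (rule ex_funpow_shift_periodic[OF _ k])
  ultimately show "x \<in> f -` ({x. (f ^^ k) x = x} \<inter> (\<Union>i<k. (f ^^ i) -` A)) \<longleftrightarrow> x \<in> {x. (f ^^ k) x = x} \<inter> (\<Union>i<k. (f ^^ i) -` A)"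
    by (simp only: vimage_eq Int_iff mem_Collect_eq UN_iff lessThan_iff Bex_def) blast
qed

lemma not_inj_on_orbit_subset:
  fixes f :: "'a \<Rightarrow> 'a" and c :: "'a \<Rightarrow> 'i"
  shows "{x. \<not> inj_on (\<lambda>l. c ((f ^^ (l - 1)) x)) {1..L}}
    \<subseteq> (\<Union>p\<in>{1..L} \<times> {1..<L}. (f ^^ (fst p - 1)) -` {y. c ((f ^^ snd p) y) = c y})"
proof
  fix x assume "x \<in> {x. \<not> inj_on (\<lambda>l. c ((f ^^ (l - 1)) x)) {1..L}}"
  then obtain a b where ab: "a \<in> {1..L}" "b \<in> {1..L}" "a \<noteq> b" "c ((f ^^ (a - 1)) x) = c ((f ^^ (b - 1)) x)"
    unfolding inj_on_def by blast
  define l where "l = min a b"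
  define l' where "l' = max a b"
  have l: "l \<in> {1..L}" "l' \<in> {1..L}" "l < l'" "c ((f ^^ (l - 1)) x) = c ((f ^^ (l' - 1)) x)"
    using ab by (auto simp: l_def l'_def min_def max_def)
  have "(f ^^ (l' - 1)) x = (f ^^ (l' - l)) ((f ^^ (l - 1)) x)"
    using l by (simp add: funpow_add[symmetric, THEN fun_cong, simplified])
  then have "x \<in> (f ^^ (l - 1)) -` {y. c ((f ^^ (l' - l)) y) = c y}"
    using l by simp
  moreover have "(l, l' - l) \<in> {1..L} \<times> {1..<L}"
    using l by auto
  ultimately show "x \<in> (\<Union>p\<in>{1..L} \<times> {1..<L}. (f ^^ (fst p - 1)) -` {y. c ((f ^^ snd p) y) = c y})"
    by force
qed

locale ergodic_automorphism = nonatomic_prob_space M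
  for M :: "'a::{second_countable_topology, t2_space} measure" +
  fixes \<tau> :: "'a \<Rightarrow> 'a"
  assumes sets_borel: "sets M = sets borel"
    and invertible: "invertible_mp_map M \<tau>"
    and ergodic: "ergodic_map M \<tau>"
begin

lemma space_eq: "space M = UNIV"
  using sets_eq_imp_space_eq[OF sets_borel] by simp

definition \<sigma> :: "'a \<Rightarrow> 'a" where
  "\<sigma> = the_inv_into UNIV \<tau>"

lemma bij_tau: "bij \<tau>"
  using invertible by (simp add: invertible_mp_map_def space_eq)

lemma sigma_tau [simp]: "\<sigma> (\<tau> x) = x" and tau_sigma [simp]: "\<tau> (\<sigma> x) = x"
  using bij_tau by (auto simp: \<sigma>_def bij_def the_inv_into_f_f f_the_inv_into_f)

lemma measurable_sigma: "\<sigma> \<in> measurable M M"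
  using invertible by (simp add: invertible_mp_map_def space_eq \<sigma>_def)

lemma measurable_funpow_sigma: "\<sigma> ^^ k \<in> measurable M M"
proof (induction k)
  case (Suc k)
  then show ?case
    using measurable_compose[OF Suc measurable_sigma] by simp
qed simp

lemma sets_preimage_funpow_sigma: "A \<in> sets M \<Longrightarrow> (\<sigma> ^^ k) -` A \<in> sets M"
  using measurable_sets[OF measurable_funpow_sigma] by (simp add: space_eq)

lemma sets_INT_preimage_funpow_sigma:
  "countable J \<Longrightarrow> (\<And>j. j \<in> J \<Longrightarrow> A j \<in> sets M) \<Longrightarrow> (\<Inter>j\<in>J. (\<sigma> ^^ k j) -` A j) \<in> sets M"
  using sets.top[of M] by (intro sets.countable_INT'') (auto simp: space_eq sets_preimage_funpow_sigma)

lemma measure_preimage_sigma: "A \<in> sets M \<Longrightarrow> measure M (\<sigma> -` A) = measure M A"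
proof -
  assume A: "A \<in> sets M"
  have "\<sigma> -` A \<in> sets M"
    using sets_preimage_funpow_sigma[OF A, of 1] by simp
  moreover have "\<tau> -` (\<sigma> -` A) = A"
    by auto
  ultimately show ?thesis
    using invertible measure_distr[of \<tau> M M "\<sigma> -` A"]
    by (simp add: invertible_mp_map_def measure_preserving_map_def space_eq)
qed

lemma measure_preimage_funpow_sigma: "A \<in> sets M \<Longrightarrow> measure M ((\<sigma> ^^ k) -` A) = measure M A"
proof (induction k arbitrary: A)
  case (Suc k)
  have vimage_Suc: "(\<sigma> ^^ Suc k) -` A = \<sigma> -` ((\<sigma> ^^ k) -` A)"
    by (rule set_eqI) (simp only: vimage_eq funpow.simps(2) o_apply funpow_swap1[of \<sigma> k])
  show ?case
    unfolding vimage_Suc using Suc measure_preimage_sigma[OF sets_preimage_funpow_sigma[OF Suc.prems]] by simp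
qed simp

lemma image_funpow_tau: "(\<tau> ^^ k) ` A = (\<sigma> ^^ k) -` A"
proof (induction k arbitrary: A)
  case (Suc k)
  have image_tau: "\<tau> ` B = \<sigma> -` B" for B
    by (auto intro: image_eqI[of _ \<tau> "\<sigma> _"])
  have "(\<tau> ^^ Suc k) ` A = \<tau> ` (\<tau> ^^ k) ` A"
    by (simp only: funpow.simps(2) image_comp)
  also have "\<dots> = \<sigma> -` (\<sigma> ^^ k) -` A"
    using Suc image_tau by simp
  also have "\<dots> = (\<sigma> ^^ Suc k) -` A"
    by (simp only: funpow_Suc_right vimage_comp)
  finally show ?case .
qed simp

lemma sigma_ergodic:
  assumes "A \<in> sets M" "\<sigma> -` A = A"
  shows "measure M A = 0 \<or> measure M A = 1"
proof -
  have "\<tau> -` A = A"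
    using assms(2) by (metis sigma_tau vimage_eq set_eq_iff)
  then show ?thesis
    using ergodic assms(1) by (simp add: ergodic_map_def space_eq)
qed

lemma inj_sigma: "inj \<sigma>"
  by (metis injI tau_sigma)

lemma sets_fixed_points_funpow_sigma: "{x. (\<sigma> ^^ k) x = x} \<in> sets M"
proof -
  have "\<sigma> ^^ k \<in> borel_measurable M" "(\<lambda>x. x) \<in> borel_measurable M"
    using measurable_funpow_sigma measurable_ident_sets[OF sets_borel]
    by (simp_all add: measurable_cong_sets[OF refl sets_borel])
  then show ?thesis
    using measurable_equality_set[of "\<sigma> ^^ k" M "\<lambda>x. x"] by (simp add: space_eq)
qed

text \<open>If a positive-measure set of points were fixed by \<open>\<sigma>\<^sup>k\<close>, ergodicity would make almost every
  point fixed; then the \<open>\<sigma>\<close>-saturation of a set \<open>A\<close> of small positive measure is invariant of measure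
  between \<open>measure M A\<close> and \<open>k * measure M A < 1\<close>.\<close>

lemma measure_fixed_points_funpow_sigma:
  assumes k: "0 < k"
  shows "measure M {x. (\<sigma> ^^ k) x = x} = 0"
proof (rule ccontr)
  define P where "P = {x. (\<sigma> ^^ k) x = x}"
  assume "measure M {x. (\<sigma> ^^ k) x = x} \<noteq> 0"
  moreover have P: "P \<in> sets M"
    using sets_fixed_points_funpow_sigma by (simp add: P_def)
  ultimately have "measure M P = 1"
    using sigma_ergodic vimage_fixed_points[OF inj_sigma] by (auto simp: P_def)
  have null: "measure M (A - P) = 0" if "A \<in> sets M" for A
  proof -
    have "measure M (A - P) \<le> measure M (space M - P)"
      using that P sets.sets_into_space[OF that] by (intro finite_measure_mono) auto
    then show ?thesis
      using prob_compl[OF P] \<open>measure M P = 1\<close> measure_nonneg[of M "A - P"] by linarith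
  qed
  have pos: "0 < measure M (space M)" "0 < 1 / (2 * real k)"
    using k by (simp_all add: prob_space)
  obtain A where A: "A \<in> sets M" "0 < measure M A" "measure M A \<le> 1 / (2 * real k)"
    by (rule exists_subset_small_measure[OF sets.top pos]) blast
  define E where "E = P \<inter> (\<Union>i<k. (\<sigma> ^^ i) -` A)"
  have E: "E \<in> sets M" "\<sigma> -` E = E"
    using P A sets_preimage_funpow_sigma vimage_periodic_saturation[OF inj_sigma k]
    by (auto simp: E_def P_def)
  have "measure M E \<le> measure M (\<Union>i<k. (\<sigma> ^^ i) -` A)"
    using A sets_preimage_funpow_sigma by (intro finite_measure_mono) (auto simp: E_def)
  also have "\<dots> \<le> (\<Sum>i<k. measure M ((\<sigma> ^^ i) -` A))"
    using A sets_preimage_funpow_sigma by (intro measure_UNION_le) auto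
  also have "\<dots> = k * measure M A"
    using A by (simp add: measure_preimage_funpow_sigma)
  also have "\<dots> < 1"
    using A k by (simp add: field_simps)
  finally have "measure M E < 1" .
  moreover have "measure M A \<le> measure M E + measure M (A - P)"
  proof -
    have "A \<subseteq> E \<union> (A - P)"
      using k by (auto simp: E_def intro!: bexI[of _ 0])
    then show ?thesis
      using A E P measure_Un_le[of E M "A - P"] finite_measure_mono[of A "E \<union> (A - P)"] by auto
  qed
  ultimately show False
    using sigma_ergodic[OF E] A(2) null[OF A(1)] by auto
qed

lemma measure_orbit_agreement_tendsto_zero:
  assumes B: "\<And>j. open (B j)" "\<And>x y. x \<noteq> y \<Longrightarrow> \<exists>j. x \<in> B j \<and> y \<notin> B j" and k: "0 < k"
  shows "(\<lambda>n. measure M {x. \<forall>j<n. x \<in> B j \<longleftrightarrow> (\<sigma> ^^ k) x \<in> B j}) \<longlonglongrightarrow> 0"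
proof -
  define D where "D n = {x. \<forall>j<n. x \<in> B j \<longleftrightarrow> (\<sigma> ^^ k) x \<in> B j}" for n
  have sets_B: "B j \<in> sets M" for j
    using B(1) by (simp add: sets_borel)
  have "D n = (\<Inter>j<n. (B j \<inter> (\<sigma> ^^ k) -` B j) \<union> (UNIV - B j) \<inter> (\<sigma> ^^ k) -` (UNIV - B j))" for n
    by (auto simp: D_def)
  moreover have "UNIV \<in> sets M"
    using sets.top[of M] by (simp add: space_eq)
  ultimately have sets_D: "D n \<in> sets M" for n
    using sets_B sets_preimage_funpow_sigma by (auto intro!: sets.countable_INT'')
  have "(\<lambda>n. measure M (D n)) \<longlonglongrightarrow> measure M (\<Inter>n. D n)"
    using sets_D by (intro finite_Lim_measure_decseq) (auto simp: decseq_def D_def)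
  moreover have "(\<Inter>n. D n) \<subseteq> {x. (\<sigma> ^^ k) x = x}"
  proof
    fix x assume x: "x \<in> (\<Inter>n. D n)"
    show "x \<in> {x. (\<sigma> ^^ k) x = x}"
    proof (rule ccontr)
      assume "x \<notin> {x. (\<sigma> ^^ k) x = x}"
      then obtain j where "x \<in> B j" "(\<sigma> ^^ k) x \<notin> B j"
        using B(2)[of x "(\<sigma> ^^ k) x"] by auto
      then show False
        using x by (auto simp: D_def)
    qed
  qed
  then have "measure M (\<Inter>n. D n) \<le> measure M {x. (\<sigma> ^^ k) x = x}"
    using sets_fixed_points_funpow_sigma by (rule finite_measure_mono)
  then have "measure M (\<Inter>n. D n) = 0"
    using measure_fixed_points_funpow_sigma[OF k] measure_nonneg[of M "\<Inter>n. D n"] by linarith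
  ultimately show ?thesis
    by (simp add: D_def)
qed

lemma exists_partition_small_returns:
  fixes L :: nat
  assumes \<epsilon>: "0 < \<epsilon>"
  obtains c :: "'a \<Rightarrow> nat set" and I
  where "finite_measurable_partition M c I"
    and "\<And>k. k \<in> {1..<L} \<Longrightarrow> measure M {x. c ((\<sigma> ^^ k) x) = c x} < \<epsilon>"
proof -
  obtain B :: "nat \<Rightarrow> 'a set" where B: "\<And>j. open (B j)" "\<And>x y. x \<noteq> y \<Longrightarrow> \<exists>j. x \<in> B j \<and> y \<notin> B j"
    using exists_separating_open_sequence by blast
  have "\<forall>\<^sub>F n in sequentially. \<forall>k\<in>{1..<L}. measure M {x. \<forall>j<n. x \<in> B j \<longleftrightarrow> (\<sigma> ^^ k) x \<in> B j} < \<epsilon>"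
    using measure_orbit_agreement_tendsto_zero[OF B] \<epsilon>
    by (intro eventually_ball_finite ballI order_tendstoD(2)) auto
  then obtain n where n: "\<And>k. k \<in> {1..<L} \<Longrightarrow> measure M {x. \<forall>j<n. x \<in> B j \<longleftrightarrow> (\<sigma> ^^ k) x \<in> B j} < \<epsilon>"
    unfolding eventually_sequentially by blast
  define c where "c x = {j\<in>{..<n}. x \<in> B j}" for x
  have "c -` {s} = (\<Inter>j\<in>s. B j) \<inter> (\<Inter>j\<in>{..<n} - s. UNIV - B j)" if "s \<in> Pow {..<n}" for s
  proof -
    have c_eq: "c x = s \<longleftrightarrow> (\<forall>j\<in>s. x \<in> B j) \<and> (\<forall>j\<in>{..<n} - s. x \<notin> B j)" for x
      using that unfolding c_def by blast
    show ?thesis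
      by (intro set_eqI) (simp only: vimage_singleton_eq c_eq Int_iff INT_iff Diff_iff UNIV_I simp_thms)
  qed
  moreover have "UNIV \<in> sets M" "\<And>j. B j \<in> sets M"
    using sets.top[of M] B(1) by (simp_all add: space_eq sets_borel)
  ultimately have "finite_measurable_partition M c (Pow {..<n})"
    by (auto simp: finite_measurable_partition_def space_eq c_def intro!: sets.Int sets.countable_INT'')
  moreover have "{x. c ((\<sigma> ^^ k) x) = c x} = {x. \<forall>j<n. x \<in> B j \<longleftrightarrow> (\<sigma> ^^ k) x \<in> B j}" for k
    by (auto simp: c_def)
  ultimately show thesis
    using that n by auto
qed

lemma exists_partition_small_cells_small_returns:
  fixes L :: nat
  assumes \<delta>: "0 < \<delta>" and \<epsilon>: "0 < \<epsilon>"
  obtains c :: "'a \<Rightarrow> nat set \<times> nat" and I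
  where "finite_measurable_partition M c I"
    and "\<And>i. i \<in> I \<Longrightarrow> measure M (c -` {i}) \<le> \<delta>"
    and "\<And>k. k \<in> {1..<L} \<Longrightarrow> measure M {x. c ((\<sigma> ^^ k) x) = c x} \<le> \<epsilon>"
proof -
  obtain c0 :: "'a \<Rightarrow> nat set" and I0 where c0: "finite_measurable_partition M c0 I0"
    and returns: "\<And>k. k \<in> {1..<L} \<Longrightarrow> measure M {x. c0 ((\<sigma> ^^ k) x) = c0 x} < \<epsilon>"
    using exists_partition_small_returns[OF \<epsilon>] by blast
  obtain c :: "'a \<Rightarrow> nat set \<times> nat" and I where c: "finite_measurable_partition M c I"
    and small: "\<And>i. i \<in> I \<Longrightarrow> measure M (c -` {i} \<inter> space M) \<le> \<delta>" and refines: "\<And>x. fst (c x) = c0 x"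
    using refine_partition_small_cells[OF c0 \<delta>] by blast
  have "measure M {x. c ((\<sigma> ^^ k) x) = c x} \<le> measure M {x. c0 ((\<sigma> ^^ k) x) = c0 x}" for k
  proof (rule finite_measure_mono)
    show "{x. c ((\<sigma> ^^ k) x) = c x} \<subseteq> {x. c0 ((\<sigma> ^^ k) x) = c0 x}"
      using refines by (metis (mono_tags, lifting) Collect_mono)
    show "{x. c0 ((\<sigma> ^^ k) x) = c0 x} \<in> sets M"
      using sets_same_cell[OF c0 measurable_funpow_sigma] by (simp add: space_eq)
  qed
  then show thesis
    using that[OF c] small returns by (simp add: space_eq) (meson le_less_trans less_imp_le)
qed

lemma measure_not_inj_on_orbit_le:
  assumes c: "finite_measurable_partition M c I"
    and returns: "\<And>k. k \<in> {1..<L} \<Longrightarrow> measure M {x. c ((\<sigma> ^^ k) x) = c x} \<le> \<epsilon>" and \<epsilon>: "0 \<le> \<epsilon>"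
  shows "measure M {x. \<not> inj_on (\<lambda>l. c ((\<sigma> ^^ (l - 1)) x)) {1..L}} \<le> real L ^ 2 * \<epsilon>"
proof -
  define R where "R k = {x. c ((\<sigma> ^^ k) x) = c x}" for k
  define P where "P = {1..L} \<times> {1..<L}"
  have sets_R: "R k \<in> sets M" for k
    using sets_same_cell[OF c measurable_funpow_sigma] by (simp add: R_def space_eq)
  have "(\<Union>p\<in>P. (\<sigma> ^^ (fst p - 1)) -` R (snd p)) \<in> sets M"
    using sets_R sets_preimage_funpow_sigma by (intro sets.finite_UN) (auto simp: P_def)
  with not_inj_on_orbit_subset[of c \<sigma> L]
  have "measure M {x. \<not> inj_on (\<lambda>l. c ((\<sigma> ^^ (l - 1)) x)) {1..L}}
      \<le> measure M (\<Union>p\<in>P. (\<sigma> ^^ (fst p - 1)) -` R (snd p))"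
    unfolding P_def R_def by (rule finite_measure_mono)
  also have "\<dots> \<le> (\<Sum>p\<in>P. measure M ((\<sigma> ^^ (fst p - 1)) -` R (snd p)))"
    using sets_R sets_preimage_funpow_sigma by (intro measure_UNION_le) (auto simp: P_def)
  also have "\<dots> = (\<Sum>p\<in>P. measure M (R (snd p)))"
    using sets_R by (intro sum.cong refl measure_preimage_funpow_sigma)
  also have "\<dots> \<le> (\<Sum>p\<in>P. \<epsilon>)"
    using returns by (intro sum_mono) (auto simp: P_def R_def)
  also have "\<dots> = real (card P) * \<epsilon>"
    by simp
  also have "\<dots> \<le> real L ^ 2 * \<epsilon>"
  proof (rule mult_right_mono[OF _ \<epsilon>])
    have "card P \<le> L * L"
      by (simp add: P_def card_cartesian_product)
    then show "real (card P) \<le> real L ^ 2"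
      unfolding power2_eq_square of_nat_mult[symmetric] of_nat_le_iff .
  qed
  finally show ?thesis .
qed

lemma exists_partition_small_cells_injective_orbits:
  fixes L :: nat
  assumes \<epsilon>: "0 < \<epsilon>"
  obtains c :: "'a \<Rightarrow> nat set \<times> nat" and I
  where "finite_measurable_partition M c I"
    and "\<And>i. i \<in> I \<Longrightarrow> measure M (c -` {i}) \<le> \<epsilon>"
    and "measure M {x. \<not> inj_on (\<lambda>l. c ((\<sigma> ^^ (l - 1)) x)) {1..L}} \<le> \<epsilon>"
proof -
  have L: "0 < real L ^ 2 + 1"
    by (intro add_nonneg_pos) auto
  then have "0 < \<epsilon> / (real L ^ 2 + 1)"
    using \<epsilon> by simp
  then obtain c :: "'a \<Rightarrow> nat set \<times> nat" and I where c: "finite_measurable_partition M c I"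
    and cells: "\<And>i. i \<in> I \<Longrightarrow> measure M (c -` {i}) \<le> \<epsilon>"
    and returns: "\<And>k. k \<in> {1..<L} \<Longrightarrow> measure M {x. c ((\<sigma> ^^ k) x) = c x} \<le> \<epsilon> / (real L ^ 2 + 1)"
    using exists_partition_small_cells_small_returns[OF \<epsilon>] by blast
  have "measure M {x. \<not> inj_on (\<lambda>l. c ((\<sigma> ^^ (l - 1)) x)) {1..L}} \<le> real L ^ 2 * (\<epsilon> / (real L ^ 2 + 1))"
    using returns \<epsilon> by (intro measure_not_inj_on_orbit_le[OF c]) auto
  also have "\<dots> \<le> \<epsilon>"
    using L \<epsilon> by (simp add: field_simps)
  finally show thesis
    using that c cells by blast
qed

end

section \<open>Itineraries through a finite partition\<close>

locale partition_itineraries = ergodic_automorphism M \<tau>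
  for M :: "'a::{second_countable_topology, t2_space} measure" and \<tau> +
  fixes L :: nat and c :: "'a \<Rightarrow> 'i" and I :: "'i set"
  assumes partition: "finite_measurable_partition M c I"
begin

lemma finite_cells: "finite I" and cell_index: "c x \<in> I" and sets_cell: "i \<in> I \<Longrightarrow> c -` {i} \<in> sets M"
  using partition by (auto simp: finite_measurable_partition_def space_eq)

definition itinerary :: "'a \<Rightarrow> nat \<Rightarrow> 'i" where
  "itinerary x = restrict (\<lambda>l. c ((\<sigma> ^^ (l - 1)) x)) {1..L}"

definition itineraries :: "(nat \<Rightarrow> 'i) set" where
  "itineraries = PiE {1..L} (\<lambda>_. I)"

definition itinerary_prob :: "(nat \<Rightarrow> 'i) \<Rightarrow> real" where
  "itinerary_prob t = measure M {x. itinerary x = t}"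

lemma finite_itineraries: "finite itineraries"
  using finite_cells by (simp add: itineraries_def finite_PiE)

lemma itinerary_in_itineraries: "itinerary x \<in> itineraries"
  using cell_index by (simp add: itinerary_def itineraries_def)

lemma sets_itinerary_eq: "{x. itinerary x = t} \<in> sets M"
proof (cases "t \<in> itineraries")
  case True
  then have "{x. itinerary x = t} = (\<Inter>l\<in>{1..L}. (\<sigma> ^^ (l - 1)) -` (c -` {t l}))"
    by (auto simp: itinerary_def itineraries_def PiE_def extensional_def fun_eq_iff)
  then show ?thesis
    using True sets_cell by (auto simp: itineraries_def PiE_iff intro!: sets_INT_preimage_funpow_sigma)
next
  case False
  then show ?thesis
    using itinerary_in_itineraries by (metis (mono_tags) empty_Collect_eq sets.empty_sets)
qed

lemma measure_itinerary_in:
  assumes "S \<subseteq> itineraries"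
  shows "measure M {x. itinerary x \<in> S} = sum itinerary_prob S"
proof -
  have "finite S"
    using assms finite_itineraries finite_subset by blast
  have "{x. itinerary x \<in> S} = (\<Union>t\<in>S. {x. itinerary x = t})"
    by auto
  also have "measure M \<dots> = sum itinerary_prob S"
    unfolding itinerary_prob_def using \<open>finite S\<close> sets_itinerary_eq
    by (intro measure_finite_Union) (auto simp: disjoint_family_on_def)
  finally show ?thesis .
qed

lemma sum_itinerary_prob: "sum itinerary_prob itineraries = 1"
  using measure_itinerary_in[of itineraries] itinerary_in_itineraries prob_space
  by (simp add: space_eq)

lemma itinerary_prob_nonneg: "0 \<le> itinerary_prob t"
  by (simp add: itinerary_prob_def)

lemma itinerary_marginal:
  assumes "l \<in> {1..L}" "i \<in> I"
  shows "sum itinerary_prob {t\<in>itineraries. t l = i} = measure M (c -` {i})"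
proof -
  have "{x. itinerary x \<in> {t\<in>itineraries. t l = i}} = (\<sigma> ^^ (l - 1)) -` (c -` {i})"
    using assms itinerary_in_itineraries by (auto simp: itinerary_def)
  then show ?thesis
    using measure_itinerary_in[of "{t\<in>itineraries. t l = i}"] measure_preimage_funpow_sigma[OF sets_cell]
      assms by auto
qed

lemma measure_INT_preimage_eq_pattern_mass:
  "measure M (\<Inter>l\<in>{1..L}. (\<sigma> ^^ (l - 1)) -` ((\<lambda>x. z (c x)) -` Q l))
    = pattern_mass itineraries itinerary_prob {1..L} Q z"
proof -
  define S where "S = {t\<in>itineraries. \<forall>l\<in>{1..L}. z (t l) \<in> Q l}"
  have "(\<Inter>l\<in>{1..L}. (\<sigma> ^^ (l - 1)) -` ((\<lambda>x. z (c x)) -` Q l)) = {x. itinerary x \<in> S}"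
    using itinerary_in_itineraries by (auto simp: S_def itinerary_def)
  then have "measure M (\<Inter>l\<in>{1..L}. (\<sigma> ^^ (l - 1)) -` ((\<lambda>x. z (c x)) -` Q l)) = sum itinerary_prob S"
    using measure_itinerary_in[of S] by (simp add: S_def)
  also have "\<dots> = pattern_mass itineraries itinerary_prob {1..L} Q z"
    unfolding S_def pattern_mass_def sum.inter_filter[OF finite_itineraries]
    by (intro sum.cong) (auto simp: pattern_indicator_eq)
  finally show ?thesis .
qed

lemma sum_itinerary_prob_not_inj_on:
  "sum itinerary_prob {t\<in>itineraries. \<not> inj_on t {1..L}}
    = measure M {x. \<not> inj_on (\<lambda>l. c ((\<sigma> ^^ (l - 1)) x)) {1..L}}"
proof -
  have "inj_on (itinerary x) {1..L} \<longleftrightarrow> inj_on (\<lambda>l. c ((\<sigma> ^^ (l - 1)) x)) {1..L}" for x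
    by (rule inj_on_cong) (simp add: itinerary_def)
  then have "{x. itinerary x \<in> {t\<in>itineraries. \<not> inj_on t {1..L}}}
      = {x. \<not> inj_on (\<lambda>l. c ((\<sigma> ^^ (l - 1)) x)) {1..L}}"
    using itinerary_in_itineraries by auto
  then show ?thesis
    using measure_itinerary_in[of "{t\<in>itineraries. \<not> inj_on t {1..L}}"] by simp
qed

lemma exists_labelling_level_patterns_close:
  fixes g :: "nat \<Rightarrow> real"
  assumes g0: "g 0 = 1" and g: "\<And>l. l < L \<Longrightarrow> g (Suc l) \<le> g l" "0 \<le> g L"
    and cells: "\<And>i. i \<in> I \<Longrightarrow> measure M (c -` {i}) \<le> \<epsilon>"
    and injective: "measure M {x. \<not> inj_on (\<lambda>l. c ((\<sigma> ^^ (l - 1)) x)) {1..L}} \<le> \<epsilon>"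
    and d: "0 \<le> d" "3 ^ L * (2 * \<epsilon> + real L ^ 2 * \<epsilon>) \<le> d\<^sup>2"
  obtains z :: "'i \<Rightarrow> nat"
  where "\<And>e. \<bar>measure M (\<Inter>l\<in>{1..L}. (\<sigma> ^^ (l - 1)) -` ((\<lambda>x. z (c x)) -` level_pattern l (e l)))
      - (\<Prod>l\<in>{1..L}. case e l of None \<Rightarrow> 1 | Some b \<Rightarrow> if b then g l else 1 - g l)\<bar> \<le> d"
proof -
  define p where "p = level_weights g L"
  have p: "\<And>v. v \<in> {0..L} \<Longrightarrow> 0 \<le> p v" "sum p {0..L} = 1"
    using level_weights_nonneg[OF g] sum_level_weights_atLeastAtMost[of 0 L g] g0 by (auto simp: p_def)
  define S :: "(nat \<Rightarrow> bool option) set" where "S = PiE {1..L} (\<lambda>_. UNIV)"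
  have "card (UNIV :: bool option set) = 3"
    by (simp add: UNIV_option_conv card_image)
  then have S: "finite S" "real (card S) = 3 ^ L"
    by (simp_all add: S_def finite_PiE card_PiE)
  have marginal: "sum itinerary_prob {t\<in>itineraries. t l = i} \<le> \<epsilon>" if "l \<in> {1..L}" "i \<in> I" for l i
    using itinerary_marginal[OF that] cells[OF that(2)] by simp
  have non_inj: "sum itinerary_prob {t\<in>itineraries. \<not> inj_on t {1..L}} \<le> \<epsilon>"
    unfolding sum_itinerary_prob_not_inj_on by (rule injective)
  have bound: "real (card S) * (2 * \<epsilon> + real (card {1..L}) ^ 2 * \<epsilon>) \<le> d\<^sup>2"
    using d(2) S(2) by simp
  obtain z where z: "\<And>e. e \<in> S \<Longrightarrow> \<bar>pattern_mass itineraries itinerary_prob {1..L} (\<lambda>l. level_pattern l (e l)) z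
      - pattern_prob p {0..L} {1..L} (\<lambda>l. level_pattern l (e l))\<bar> \<le> d"
    using exists_labelling_patterns_close[OF finite_cells finite_atLeastAtMost finite_atLeastAtMost
        itineraries_def p itinerary_prob_nonneg sum_itinerary_prob marginal non_inj S(1) d(1) bound,
        where Q = "\<lambda>e l. level_pattern l (e l)"] by blast
  show thesis
  proof (rule that)
    fix e :: "nat \<Rightarrow> bool option"
    define e' where "e' = restrict e {1..L}"
    have e': "e' \<in> S" "\<And>l. l \<in> {1..L} \<Longrightarrow> e' l = e l"
      by (auto simp: e'_def S_def)
    have "(\<Inter>l\<in>{1..L}. (\<sigma> ^^ (l - 1)) -` ((\<lambda>x. z (c x)) -` level_pattern l (e l)))
        = (\<Inter>l\<in>{1..L}. (\<sigma> ^^ (l - 1)) -` ((\<lambda>x. z (c x)) -` level_pattern l (e' l)))"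
      using e'(2) by auto
    moreover have "(\<Prod>l\<in>{1..L}. case e l of None \<Rightarrow> 1 | Some b \<Rightarrow> if b then g l else 1 - g l)
        = pattern_prob p {0..L} {1..L} (\<lambda>l. level_pattern l (e' l))"
      unfolding p_def pattern_prob_level_pattern[where g = g, OF g0] using e'(2) by (intro prod.cong) auto
    ultimately show "\<bar>measure M (\<Inter>l\<in>{1..L}. (\<sigma> ^^ (l - 1)) -` ((\<lambda>x. z (c x)) -` level_pattern l (e l)))
      - (\<Prod>l\<in>{1..L}. case e l of None \<Rightarrow> 1 | Some b \<Rightarrow> if b then g l else 1 - g l)\<bar> \<le> d"
      using z[OF e'(1)] measure_INT_preimage_eq_pattern_mass[of z "\<lambda>l. level_pattern l (e' l)"] by simp
  qed
qed

end

section \<open>Nested sets with nearly independent orbits\<close>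

lemma (in finite_measure) measure_diff_le_measure_sym_diff:
  assumes "A \<in> sets M" "B \<in> sets M"
  shows "\<bar>measure M A - measure M B\<bar> \<le> measure M (sym_diff A B)"
proof -
  have "measure M X \<le> measure M Y + measure M (sym_diff A B)"
    if "X \<in> sets M" "Y \<in> sets M" "X - Y \<subseteq> sym_diff A B" for X Y
  proof -
    have "measure M X \<le> measure M (Y \<union> sym_diff A B)"
      using that assms by (intro finite_measure_mono) auto
    also have "\<dots> \<le> measure M Y + measure M (sym_diff A B)"
      using that assms by (intro measure_Un_le) auto
    finally show ?thesis .
  qed
  from this[of A B] this[of B A] show ?thesis
    using assms by auto
qed

lemma sets_set_power: "A \<in> sets M \<Longrightarrow> set_power M A b \<in> sets M"
  by (simp add: set_power_def)

lemma sym_diff_set_power: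
  "A \<subseteq> space M \<Longrightarrow> B \<subseteq> space M \<Longrightarrow> sym_diff (set_power M A b) (set_power M B b) = sym_diff A B"
  by (auto simp: set_power_def)

lemma (in prob_space) measure_set_power:
  "A \<in> sets M \<Longrightarrow> measure M (set_power M A b) = (if b then measure M A else 1 - measure M A)"
  by (simp add: set_power_def prob_compl)

context ergodic_automorphism
begin

lemma measure_INT_preimage_diff_le:
  assumes J: "finite J" and A: "\<And>j. j \<in> J \<Longrightarrow> A j \<in> sets M" and B: "\<And>j. j \<in> J \<Longrightarrow> B j \<in> sets M"
  shows "\<bar>measure M (\<Inter>j\<in>J. (\<sigma> ^^ k j) -` A j) - measure M (\<Inter>j\<in>J. (\<sigma> ^^ k j) -` B j)\<bar>
    \<le> (\<Sum>j\<in>J. measure M (sym_diff (A j) (B j)))"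
proof -
  have sets_sym_diff: "(\<sigma> ^^ k j) -` sym_diff (A j) (B j) \<in> sets M" if "j \<in> J" for j
    using A[OF that] B[OF that] by (intro sets_preimage_funpow_sigma) auto
  have "\<bar>measure M (\<Inter>j\<in>J. (\<sigma> ^^ k j) -` A j) - measure M (\<Inter>j\<in>J. (\<sigma> ^^ k j) -` B j)\<bar>
      \<le> measure M (sym_diff (\<Inter>j\<in>J. (\<sigma> ^^ k j) -` A j) (\<Inter>j\<in>J. (\<sigma> ^^ k j) -` B j))"
    using countable_finite[OF J] A B by (intro measure_diff_le_measure_sym_diff sets_INT_preimage_funpow_sigma) auto
  also have "\<dots> \<le> measure M (\<Union>j\<in>J. (\<sigma> ^^ k j) -` sym_diff (A j) (B j))"
    using J sets_sym_diff by (intro finite_measure_mono) auto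
  also have "\<dots> \<le> (\<Sum>j\<in>J. measure M ((\<sigma> ^^ k j) -` sym_diff (A j) (B j)))"
    using J sets_sym_diff by (intro measure_UNION_le) auto
  also have "\<dots> = (\<Sum>j\<in>J. measure M (sym_diff (A j) (B j)))"
    using A B by (intro sum.cong refl measure_preimage_funpow_sigma) auto
  finally show ?thesis .
qed

lemma exists_height_near_independent:
  fixes g :: "nat \<Rightarrow> real" and L :: nat
  assumes g0: "g 0 = 1" and g: "\<And>l. l < L \<Longrightarrow> g (Suc l) \<le> g l" "0 \<le> g L" and d: "0 < d"
  obtains h :: "'a \<Rightarrow> nat" where "\<And>l. {x. l \<le> h x} \<in> sets M"
    and "\<And>e. \<bar>measure M (\<Inter>l\<in>{1..L}. (\<sigma> ^^ (l - 1)) -` (h -` level_pattern l (e l)))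
      - (\<Prod>l\<in>{1..L}. case e l of None \<Rightarrow> 1 | Some b \<Rightarrow> if b then g l else 1 - g l)\<bar> \<le> d"
proof -
  define \<epsilon> where "\<epsilon> = d\<^sup>2 / (3 ^ L * (2 + real L ^ 2))"
  have pos: "0 < (3 :: real) ^ L * (2 + real L ^ 2)"
    by (simp add: add_pos_nonneg)
  have "3 ^ L * (2 * \<epsilon> + real L ^ 2 * \<epsilon>) = 3 ^ L * (2 + real L ^ 2) * \<epsilon>"
    by (simp add: algebra_simps)
  also have "\<dots> = d\<^sup>2"
    using pos unfolding \<epsilon>_def by (metis less_irrefl nonzero_mult_div_cancel_left times_divide_eq_right)
  finally have \<epsilon>: "0 < \<epsilon>" "3 ^ L * (2 * \<epsilon> + real L ^ 2 * \<epsilon>) = d\<^sup>2"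
    using pos d by (simp_all add: \<epsilon>_def)
  obtain c :: "'a \<Rightarrow> nat set \<times> nat" and I where c: "finite_measurable_partition M c I"
    and cells: "\<And>i. i \<in> I \<Longrightarrow> measure M (c -` {i}) \<le> \<epsilon>"
    and injective: "measure M {x. \<not> inj_on (\<lambda>l. c ((\<sigma> ^^ (l - 1)) x)) {1..L}} \<le> \<epsilon>"
    using exists_partition_small_cells_injective_orbits[OF \<epsilon>(1)] by blast
  interpret partition_itineraries M \<tau> L c I
    by unfold_locales (fact c)
  obtain z :: "nat set \<times> nat \<Rightarrow> nat" where z: "\<And>e. \<bar>measure M (\<Inter>l\<in>{1..L}. (\<sigma> ^^ (l - 1)) -` ((\<lambda>x. z (c x)) -` level_pattern l (e l)))
      - (\<Prod>l\<in>{1..L}. case e l of None \<Rightarrow> 1 | Some b \<Rightarrow> if b then g l else 1 - g l)\<bar> \<le> d"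
    using exists_labelling_level_patterns_close[OF g0 g cells injective less_imp_le[OF d] eq_refl[OF \<epsilon>(2)]]
    by blast
  show thesis
  proof (rule that[of "\<lambda>x. z (c x)"])
    fix l
    have "{x. l \<le> z (c x)} = (\<Union>i\<in>{i\<in>I. l \<le> z i}. c -` {i})"
      using cell_index by auto
    then show "{x. l \<le> z (c x)} \<in> sets M"
      using finite_cells sets_cell by (simp only:) (intro sets.finite_UN, auto)
  qed (rule z)
qed

lemma exists_nested_sets_near_independent:
  fixes g :: "nat \<Rightarrow> real" and L :: nat
  assumes g0: "g 0 = 1" and g: "\<And>l. l < L \<Longrightarrow> g (Suc l) \<le> g l" "0 \<le> g L" and d: "0 < d"
  obtains U where "\<And>l. U l \<in> sets M" "U 0 = space M" "\<And>l. U (Suc l) \<subseteq> U l"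
    and "\<And>l. l \<in> {1..L} \<Longrightarrow> \<bar>measure M (U l) - g l\<bar> \<le> d"
    and "\<And>e. \<bar>measure M (\<Inter>l\<in>{1..L}. (\<sigma> ^^ (l - 1)) -` set_power M (U l) (e l))
      - (\<Prod>l\<in>{1..L}. if e l then g l else 1 - g l)\<bar> \<le> d"
proof -
  obtain h :: "'a \<Rightarrow> nat" where sets_h: "\<And>l. {x. l \<le> h x} \<in> sets M"
    and near: "\<And>e. \<bar>measure M (\<Inter>l\<in>{1..L}. (\<sigma> ^^ (l - 1)) -` (h -` level_pattern l (e l)))
      - (\<Prod>l\<in>{1..L}. case e l of None \<Rightarrow> 1 | Some b \<Rightarrow> if b then g l else 1 - g l)\<bar> \<le> d"
    using exists_height_near_independent[OF g0 g d] by blast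
  define U where "U l = {x. l \<le> h x}" for l
  have set_power_U: "set_power M (U l) b = h -` level_pattern l (Some b)" for l b
    by (auto simp: set_power_def level_pattern_def U_def space_eq)
  show thesis
  proof
    show "U l \<in> sets M" "U (Suc l) \<subseteq> U l" for l
      using sets_h by (auto simp: U_def)
    show "U 0 = space M"
      by (simp add: U_def space_eq)
  next
    fix l assume l: "l \<in> {1..L}"
    define e where "e l' = (if l' = l then Some True else None)" for l'
    have "(\<Inter>l'\<in>{1..L}. (\<sigma> ^^ (l' - 1)) -` (h -` level_pattern l' (e l'))) = (\<sigma> ^^ (l - 1)) -` U l"
    proof (intro equalityI subsetI)
      fix x assume "x \<in> (\<Inter>l'\<in>{1..L}. (\<sigma> ^^ (l' - 1)) -` (h -` level_pattern l' (e l')))"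
      then have "x \<in> (\<sigma> ^^ (l - 1)) -` (h -` level_pattern l (e l))"
        using l by blast
      then show "x \<in> (\<sigma> ^^ (l - 1)) -` U l"
        by (simp add: e_def level_pattern_def U_def)
    qed (auto simp: e_def level_pattern_def U_def)
    moreover have "(\<Prod>l'\<in>{1..L}. case e l' of None \<Rightarrow> 1 | Some b \<Rightarrow> if b then g l' else 1 - g l') = g l"
      using l by (simp add: e_def if_distrib prod.delta cong: if_cong)
    ultimately show "\<bar>measure M (U l) - g l\<bar> \<le> d"
      using near[of e] measure_preimage_funpow_sigma[OF sets_h] by (simp add: U_def)
  next
    fix e :: "nat \<Rightarrow> bool"
    show "\<bar>measure M (\<Inter>l\<in>{1..L}. (\<sigma> ^^ (l - 1)) -` set_power M (U l) (e l))
      - (\<Prod>l\<in>{1..L}. if e l then g l else 1 - g l)\<bar> \<le> d"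
      using near[of "\<lambda>l. Some (e l)"] by (simp add: set_power_U)
  qed
qed

lemma exists_nested_sets_exact_near_independent:
  fixes g :: "nat \<Rightarrow> real" and L :: nat
  assumes g0: "g 0 = 1" and g: "\<And>l. l < L \<Longrightarrow> g (Suc l) < g l" "0 \<le> g L" and d: "0 < d"
  obtains V where "\<And>l. l < L \<Longrightarrow> V (Suc l) \<subseteq> V l" "\<And>l. l \<le> L \<Longrightarrow> V l \<in> sets M" "\<And>l. l \<le> L \<Longrightarrow> measure M (V l) = g l"
    and "\<And>e. \<bar>measure M (\<Inter>l\<in>{1..L}. (\<sigma> ^^ (l - 1)) -` set_power M (V l) (e l))
      - (\<Prod>l\<in>{1..L}. if e l then g l else 1 - g l)\<bar> \<le> (1 + real L * 2 ^ L) * d"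
proof -
  obtain U where U: "\<And>l. U l \<in> sets M" "U 0 = space M" "\<And>l. U (Suc l) \<subseteq> U l"
    and U_near: "\<And>l. l \<in> {1..L} \<Longrightarrow> \<bar>measure M (U l) - g l\<bar> \<le> d"
    and U_indep: "\<And>e. \<bar>measure M (\<Inter>l\<in>{1..L}. (\<sigma> ^^ (l - 1)) -` set_power M (U l) (e l))
      - (\<Prod>l\<in>{1..L}. if e l then g l else 1 - g l)\<bar> \<le> d"
    using exists_nested_sets_near_independent[OF g0 _ g(2) d] g(1) less_imp_le by blast
  obtain V where V: "\<forall>l<L. V (Suc l) \<subseteq> V l" "\<forall>l\<le>L. V l \<in> sets M \<and> measure M (V l) = g l
      \<and> measure M (sym_diff (V l) (U l)) \<le> (2 ^ l - 1) * d"
    using exists_nested_sets_exact_measures[OF U g0 U_near g] by blast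
  show thesis
  proof (rule that)
    show "V (Suc l) \<subseteq> V l" if "l < L" for l
      using V(1) that by blast
    show "V l \<in> sets M" "measure M (V l) = g l" if "l \<le> L" for l
      using V(2) that by auto
  next
    fix e :: "nat \<Rightarrow> bool"
    have "\<bar>measure M (\<Inter>l\<in>{1..L}. (\<sigma> ^^ (l - 1)) -` set_power M (V l) (e l))
        - measure M (\<Inter>l\<in>{1..L}. (\<sigma> ^^ (l - 1)) -` set_power M (U l) (e l))\<bar>
      \<le> (\<Sum>l\<in>{1..L}. measure M (sym_diff (set_power M (V l) (e l)) (set_power M (U l) (e l))))"
      using V(2) U(1) by (intro measure_INT_preimage_diff_le) (auto simp: sets_set_power)
    also have "\<dots> = (\<Sum>l\<in>{1..L}. measure M (sym_diff (V l) (U l)))"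
      by (simp add: sym_diff_set_power space_eq)
    also have "\<dots> \<le> (\<Sum>l\<in>{1..L}. 2 ^ L * d)"
    proof (rule sum_mono)
      fix l assume "l \<in> {1..L}"
      then have "(2 :: real) ^ l \<le> 2 ^ L"
        by (intro power_increasing) auto
      then have "(2 :: real) ^ l - 1 \<le> 2 ^ L"
        by linarith
      then show "measure M (sym_diff (V l) (U l)) \<le> 2 ^ L * d"
        using V(2) \<open>l \<in> {1..L}\<close> d by (meson atLeastAtMost_iff mult_right_mono less_imp_le order_trans)
    qed
    finally show "\<bar>measure M (\<Inter>l\<in>{1..L}. (\<sigma> ^^ (l - 1)) -` set_power M (V l) (e l))
      - (\<Prod>l\<in>{1..L}. if e l then g l else 1 - g l)\<bar> \<le> (1 + real L * 2 ^ L) * d"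
      using U_indep[of e] by (simp add: algebra_simps)
  qed
qed

end

theorem mainTheorem10:
  fixes M :: "'a::polish_space measure" and \<tau> :: "'a \<Rightarrow> 'a"
    and L :: nat and \<gamma> :: "nat \<Rightarrow> real" and \<eta> :: real
  assumes "standard_prob_space M" and "non_atomic M"
    and "invertible_mp_map M \<tau>" and "ergodic_map M \<tau>"
    and "L \<ge> 1"
    and "0 < \<gamma> L" and "\<forall>l\<in>{1..<L}. \<gamma> (l+1) < \<gamma> l" and "\<gamma> 1 < 1"
    and "\<eta> > 0"
  shows "\<exists>U :: nat \<Rightarrow> 'a set.
           (\<forall>l\<in>{1..L}. U l \<in> sets M \<and> measure M (U l) = \<gamma> l) \<and>
           (\<forall>l\<in>{1..<L}. U (l+1) \<subseteq> U l) \<and>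
           (\<forall>e :: nat \<Rightarrow> bool.
              \<bar>measure M (\<Inter>l\<in>{1..L}. (\<tau> ^^ (l-1)) ` set_power M (U l) (e l))
               - (\<Prod>l=1..L. measure M (set_power M (U l) (e l)))\<bar> \<le> \<eta>)"
proof -
  interpret ergodic_automorphism M \<tau>
    using assms(1-4)
    by (simp add: ergodic_automorphism_def ergodic_automorphism_axioms_def nonatomic_prob_space_def
        nonatomic_prob_space_axioms_def standard_prob_space_def)
  define g where "g l = (if l = 0 then 1 else \<gamma> l)" for l
  have g: "g 0 = 1" "\<And>l. l < L \<Longrightarrow> g (Suc l) < g l" "0 \<le> g L"
    using assms(5-8) by (auto simp: g_def)
  define d where "d = \<eta> / (1 + real L * 2 ^ L)"
  have "0 < 1 + real L * 2 ^ L"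
    by (simp add: add_pos_nonneg)
  then have d: "0 < d" "(1 + real L * 2 ^ L) * d = \<eta>"
    using assms(9) by (simp_all add: d_def)
  obtain V where V: "\<And>l. l < L \<Longrightarrow> V (Suc l) \<subseteq> V l" "\<And>l. l \<le> L \<Longrightarrow> V l \<in> sets M"
    "\<And>l. l \<le> L \<Longrightarrow> measure M (V l) = g l"
    and indep: "\<And>e. \<bar>measure M (\<Inter>l\<in>{1..L}. (\<sigma> ^^ (l - 1)) -` set_power M (V l) (e l))
      - (\<Prod>l\<in>{1..L}. if e l then g l else 1 - g l)\<bar> \<le> (1 + real L * 2 ^ L) * d"
    using exists_nested_sets_exact_near_independent[OF g d(1)] by blast
  have "(\<Prod>l=1..L. measure M (set_power M (V l) (e l))) = (\<Prod>l\<in>{1..L}. if e l then g l else 1 - g l)" for e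
    using V(2,3) by (intro prod.cong) (auto simp: measure_set_power)
  then show ?thesis
    using V indep d(2) by (intro exI[of _ V]) (auto simp: g_def image_funpow_tau)
qed

end
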